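(* Let $A_1,\dots,A_m,B_1,\dots,B_m$ be quadratic forms on $\mathbb{R}^n$ with $0\preceq A_i\preceq I$, $B_i\succeq0$ and $\sum_iB_i(X)=\|X\|^2$ (identified with their symmetric matrices). Let $\{X\}$ be a finitely supported distribution over unit vectors in $\mathbb{R}^n$. Let $\beta_i=\mathbb{E}_XB_i(X)$ and, for $\beta_i>0$, $\rho_i=\mathbb{E}_X[XX^\top B_i(X)]/\beta_i$ (for $\beta_i=0$, $\rho_i$ is an arbitrary density matrix). Suppose $\sum_i\beta_iH(\rho_i)\ge H\!\left(\sum_i\beta_i\rho_i\right)-\epsilon^2$. Then $$\sum_i\mathbb{E}_XA_i(X)\cdot\mathbb{E}_XB_i(X)\ \ge\ \sum_i\mathbb{E}_X[A_i(X)B_i(X)]-\epsilon.$$ The same holds if $\{X\}$ is replaced by a level-$4$ pseudoexpectation $\tilde{\mathbb{E}}$ satisfying $\tilde{\mathbb{E}}[(\|X\|^2-1)Q]=0$ for all $Q$ of degree at most $2$.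
   Context: $H(\rho)=-\mathrm{Tr}\,\rho\log\rho$ is the von Neumann entropy (natural logarithm) of a density matrix (PSD, trace one). A level-$4$ pseudoexpectation is a linear functional on polynomials of degree at most $4$ with $\tilde{\mathbb{E}}1=1$ and $\tilde{\mathbb{E}}Q^2\ge0$ for $\deg Q\le2$. *)

theory Defs
  imports "HOL-Analysis.Analysis" "HOL-Probability.Probability"
begin

definition qf :: "real^'n^'n \<Rightarrow> real^'n \<Rightarrow> real" where
  "qf A x = x \<bullet> (A *v x)"

definition symmetric_mat :: "real^'n^'n \<Rightarrow> bool" where
  "symmetric_mat A \<longleftrightarrow> transpose A = A"

definition psd :: "real^'n^'n \<Rightarrow> bool" where
  "psd A \<longleftrightarrow> symmetric_mat A \<and> (\<forall>x. 0 \<le> qf A x)"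

definition below_id :: "real^'n^'n \<Rightarrow> bool" where
  "below_id A \<longleftrightarrow> psd (mat 1 - A)"

definition density_matrix :: "real^'n^'n \<Rightarrow> bool" where
  "density_matrix \<rho> \<longleftrightarrow> psd \<rho> \<and> trace \<rho> = 1"

definition diag_mat :: "real^'n \<Rightarrow> real^'n^'n" where
  "diag_mat d = (\<chi> i j. if i = j then d $ i else 0)"

definition mat_fun :: "(real \<Rightarrow> real) \<Rightarrow> real^'n^'n \<Rightarrow> real^'n^'n" where
  "mat_fun f M = (THE N. \<exists>U d. orthogonal_matrix U \<and> M = U ** diag_mat d ** transpose U
                          \<and> N = U ** diag_mat (\<chi> k. f (d $ k)) ** transpose U)"

text \<open>von Neumann entropy with natural logarithm, H(rho) = - Tr rho log rho
  (with the convention 0 log 0 = 0, automatic since ln 0 = 0 in Isabelle).\<close>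
definition vn_entropy :: "real^'n^'n \<Rightarrow> real" where
  "vn_entropy \<rho> = - trace (\<rho> ** mat_fun ln \<rho>)"

definition outer :: "real^'n \<Rightarrow> real^'n^'n" where
  "outer x = (\<chi> i j. x $ i * x $ j)"

definition monomial_fun :: "('n::finite \<Rightarrow> nat) \<Rightarrow> real^'n \<Rightarrow> real" where
  "monomial_fun a x = (\<Prod>k\<in>UNIV. (x $ k) ^ a k)"

definition poly_fun :: "nat \<Rightarrow> (real^'n::finite \<Rightarrow> real) \<Rightarrow> bool" where
  "poly_fun d f \<longleftrightarrow> (\<exists>c :: ('n \<Rightarrow> nat) \<Rightarrow> real.
      f = (\<lambda>x. \<Sum>a\<in>{a. sum a UNIV \<le> d}. c a * monomial_fun a x))"

definition pseudo_exp4 :: "((real^'n::finite \<Rightarrow> real) \<Rightarrow> real) \<Rightarrow> bool" where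
  "pseudo_exp4 E \<longleftrightarrow>
     (\<forall>f g. poly_fun 4 f \<longrightarrow> poly_fun 4 g \<longrightarrow> E (\<lambda>x. f x + g x) = E f + E g) \<and>
     (\<forall>f c. poly_fun 4 f \<longrightarrow> E (\<lambda>x. c * f x) = c * E f) \<and>
     E (\<lambda>x. 1) = 1 \<and>
     (\<forall>Q. poly_fun 2 Q \<longrightarrow> 0 \<le> E (\<lambda>x. (Q x)^2))"

end

theory Submission
  imports Defs
begin

text \<open>Put \<open>\<beta>\<^sub>i = E B\<^sub>i\<close> and \<open>R = \<Sum>\<^sub>i \<beta>\<^sub>i \<rho>\<^sub>i\<close>. Since \<open>\<Sum>\<^sub>i B\<^sub>i(x) = |x|\<^sup>2\<close> and \<open>|x| = 1\<close>, one has
  \<open>E A\<^sub>i = tr(A\<^sub>i R)\<close> and \<open>E[A\<^sub>i B\<^sub>i] = \<beta>\<^sub>i tr(A\<^sub>i \<rho>\<^sub>i)\<close>, so the covariance defect is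
  \<open>\<Sum>\<^sub>i \<beta>\<^sub>i tr(A\<^sub>i (\<rho>\<^sub>i - R))\<close>, while the entropy hypothesis says \<open>\<Sum>\<^sub>i \<beta>\<^sub>i D(\<rho>\<^sub>i \<parallel> R) \<le> \<epsilon>\<^sup>2\<close>.
  For \<open>0 \<le> A \<le> I\<close> a Pinsker-type bound \<open>tr(A(\<rho> - R))\<^sup>2 \<le> D(\<rho> \<parallel> R)\<close> holds: with the
  affinity \<open>t = tr(\<surd>\<rho> \<surd>R)\<close>, Cauchy--Schwarz gives \<open>tr(A(\<rho> - R))\<^sup>2 \<le> 1 - t\<^sup>2 \<le> 2 - 2t\<close>, and
  \<open>ln q \<le> q - 1\<close>, applied eigenvalue by eigenvalue, gives \<open>2 - 2t \<le> D(\<rho> \<parallel> R)\<close>. Cauchy--Schwarz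
  over \<open>i\<close> then bounds the defect by \<open>\<epsilon>\<close>.\<close>

lemma matrix_add_rdistrib: "((A::real^'n^'n) + B) ** C = A ** C + B ** C"
  by (simp add: vec_eq_iff matrix_matrix_mult_def sum.distrib algebra_simps)

lemma matrix_diff_ldistrib: "(A::real^'n^'n) ** (B - C) = A ** B - A ** C"
  by (simp add: vec_eq_iff matrix_matrix_mult_def sum_subtractf algebra_simps)

lemma matrix_diff_rdistrib: "((A::real^'n^'n) - B) ** C = A ** C - B ** C"
  by (simp add: vec_eq_iff matrix_matrix_mult_def sum_subtractf algebra_simps)

lemma transpose_add: "transpose ((A::real^'n^'n) + B) = transpose A + transpose B"
  by (simp add: vec_eq_iff transpose_def)

lemma transpose_diff: "transpose ((A::real^'n^'n) - B) = transpose A - transpose B"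
  by (simp add: vec_eq_iff transpose_def)

lemma trace_scaleR: "trace (c *\<^sub>R (A::real^'n^'n)) = c * trace A"
  by (simp add: trace_def sum_distrib_left)

lemma trace_transpose: "trace (transpose (A::real^'n^'n)) = trace A"
  by (simp add: trace_def transpose_def)

lemma trace_matrix_mult_eq_inner: "trace ((P::real^'n^'n) ** Q) = P \<bullet> transpose Q"
  by (simp add: trace_def matrix_matrix_mult_def inner_vec_def transpose_def)

lemma trace_sum_scaleR_mult:
  "finite I \<Longrightarrow> trace ((\<Sum>i\<in>I. c i *\<^sub>R (P i :: real^'n^'n)) ** L) = (\<Sum>i\<in>I. c i * trace (P i ** L))"
  by (simp add: trace_matrix_mult_eq_inner inner_sum_left)

lemma symmetric_entry: "transpose M = M \<Longrightarrow> (M::real^'n^'n) $ i $ j = M $ j $ i"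
  by (metis transpose_def vec_lambda_beta)

lemma symmetric_inner_mult:
  fixes M :: "real^'n^'n"
  assumes "transpose M = M"
  shows "(M *v x) \<bullet> y = x \<bullet> (M *v y)"
proof -
  have "(M *v x) \<bullet> y = (\<Sum>i\<in>UNIV. (\<Sum>j\<in>UNIV. M$i$j * x$j) * y$i)"
    by (simp add: inner_vec_def matrix_vector_mult_def)
  also have "\<dots> = (\<Sum>i\<in>UNIV. \<Sum>j\<in>UNIV. M$i$j * x$j * y$i)" by (simp add: sum_distrib_right)
  also have "\<dots> = (\<Sum>j\<in>UNIV. \<Sum>i\<in>UNIV. M$i$j * x$j * y$i)" by (rule sum.swap)
  also have "\<dots> = (\<Sum>j\<in>UNIV. x$j * (\<Sum>i\<in>UNIV. M$j$i * y$i))"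
  proof (rule sum.cong[OF refl])
    fix j show "(\<Sum>i\<in>UNIV. M$i$j * x$j * y$i) = x$j * (\<Sum>i\<in>UNIV. M$j$i * y$i)"
      unfolding sum_distrib_left by (rule sum.cong[OF refl]) (simp add: symmetric_entry[OF assms, of _ j])
  qed
  also have "\<dots> = x \<bullet> (M *v y)" by (simp add: inner_vec_def matrix_vector_mult_def mult.commute)
  finally show ?thesis .
qed

lemma qf_scaleR_vector: "qf M (c *\<^sub>R x) = c^2 * qf M x"
  by (simp add: qf_def power2_eq_square matrix_vector_mult_scaleR)

lemma qf_add_vector:
  fixes M :: "real^'n^'n"
  assumes "transpose M = M"
  shows "qf M (v + t *\<^sub>R w) = qf M v + 2*t*((M *v v) \<bullet> w) + t^2 * qf M w"
proof -
  have "qf M (v + t *\<^sub>R w) = v \<bullet> (M *v v) + t * (v \<bullet> (M *v w)) + t * (w \<bullet> (M *v v)) + t^2 * (w \<bullet> (M *v w))"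
    by (simp add: qf_def matrix_vector_right_distrib matrix_vector_mult_scaleR inner_add_left
        inner_add_right power2_eq_square algebra_simps)
  moreover have "v \<bullet> (M *v w) = (M *v v) \<bullet> w" using symmetric_inner_mult[OF assms] by simp
  moreover have "w \<bullet> (M *v v) = (M *v v) \<bullet> w" by (simp add: inner_commute)
  ultimately show ?thesis by (simp add: qf_def)
qed

lemma qf_add: "qf ((A::real^'n^'n) + B) u = qf A u + qf B u"
  by (simp add: qf_def matrix_vector_mult_add_rdistrib inner_add_right)

lemma qf_diff: "qf ((A::real^'n^'n) - B) u = qf A u - qf B u"
  by (simp add: qf_def matrix_vector_mult_diff_rdistrib inner_diff_right)

lemma qf_scaleR: "qf (c *\<^sub>R (A::real^'n^'n)) u = c * qf A u"
  by (simp add: qf_def scaleR_matrix_vector_assoc[symmetric])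

lemma qf_mat_1: "qf (mat 1 :: real^'n^'n) u = u \<bullet> u"
  by (simp add: qf_def)

lemma qf_sum_scaleR:
  "finite I \<Longrightarrow> qf (\<Sum>i\<in>I. c i *\<^sub>R (P i :: real^'n^'n)) u = (\<Sum>i\<in>I. c i * qf (P i) u)"
  by (induction I rule: finite_induct) (simp_all add: qf_add qf_scaleR qf_def[of 0])

lemma psd_symmetric: "psd A \<Longrightarrow> transpose A = A"
  by (simp add: psd_def symmetric_mat_def)

lemma psd_below_id_qf_bounds:
  assumes "psd A" "below_id A"
  shows "0 \<le> qf A v" "qf A v \<le> v \<bullet> v"
proof -
  show "0 \<le> qf A v" using assms(1) by (simp add: psd_def)
  have "0 \<le> qf (mat 1 - A) v" using assms(2) by (simp add: below_id_def psd_def)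
  thus "qf A v \<le> v \<bullet> v" by (simp add: qf_diff qf_mat_1)
qed

section \<open>The spectral theorem\<close>

lemma linear_coeff_zero_if_quadratic_nonpos:
  fixes c K :: real
  assumes "\<And>t. 2*t*c + t^2 * K \<le> 0"
  shows "c = 0"
proof -
  define s where "s = 1 / (\<bar>K\<bar> + 1)"
  have s: "s > 0" "s * \<bar>K\<bar> < 1" unfolding s_def by (auto simp: field_simps)
  have "2*(s*c)*c + (s*c)^2*K \<le> 0" using assms .
  hence "c^2 * (s * (2 + s*K)) \<le> 0" by (simp add: power2_eq_square algebra_simps)
  moreover have "-\<bar>K\<bar> \<le> K" by linarith
  hence "s * (-\<bar>K\<bar>) \<le> s * K" using s(1) by (rule mult_left_mono[OF _ less_imp_le])
  hence "s * (2 + s*K) > 0" using s by (simp add: mult_pos_pos)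
  ultimately show ?thesis by (metis mult_pos_pos not_le zero_less_power2)
qed

lemma qf_le_max_on_sphere:
  fixes M :: "real^'n^'n"
  assumes "subspace S" "v \<in> S" "\<forall>y\<in>S \<inter> sphere 0 1. qf M y \<le> qf M v" "y \<in> S"
  shows "qf M y \<le> qf M v * (norm y)^2"
proof (cases "y = 0")
  case True thus ?thesis by (simp add: qf_def)
next
  case False
  define z where "z = (1 / norm y) *\<^sub>R y"
  have "z \<in> S" unfolding z_def using assms(1,4) subspace_scale by blast
  moreover have "norm z = 1" using False by (simp add: z_def)
  ultimately have "qf M z \<le> qf M v" using assms(3) by simp
  moreover have "y = norm y *\<^sub>R z" using False by (simp add: z_def)
  hence "qf M y = (norm y)^2 * qf M z" by (metis qf_scaleR_vector)
  ultimately show ?thesis by (metis mult.commute mult_right_mono zero_le_power2)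
qed

text \<open>Rayleigh quotient argument: a unit vector maximising the quadratic form on an invariant
  subspace is an eigenvector, since a first-order variation \<open>v + t w\<close> with \<open>w \<bottom> v\<close> cannot
  increase the quotient.\<close>

lemma qf_max_on_sphere_eigenvector:
  fixes M :: "real^'n^'n"
  assumes sym: "transpose M = M" and S: "subspace S" and inv: "\<forall>x\<in>S. M *v x \<in> S"
    and v: "v \<in> S" "norm v = 1" and max: "\<forall>y\<in>S \<inter> sphere 0 1. qf M y \<le> qf M v"
  shows "M *v v = qf M v *\<^sub>R v"
proof -
  define lam where "lam = qf M v"
  have vv: "v \<bullet> v = 1" using v(2) by (simp add: norm_eq_1)
  have perp: "(M *v v) \<bullet> w = 0" if w: "w \<in> S" "v \<bullet> w = 0" for w
  proof (rule linear_coeff_zero_if_quadratic_nonpos[where K = "qf M w - lam * (norm w)^2"])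
    fix t :: real
    have "v + t *\<^sub>R w \<in> S" using S v(1) w(1) subspace_add subspace_scale by blast
    hence "qf M (v + t *\<^sub>R w) \<le> lam * (norm (v + t *\<^sub>R w))^2"
      unfolding lam_def by (rule qf_le_max_on_sphere[OF S v(1) max])
    moreover have "(norm (v + t *\<^sub>R w))^2 = 1 + t^2 * (norm w)^2"
    proof -
      have "(norm (v + t *\<^sub>R w))^2 = (v + t *\<^sub>R w) \<bullet> (v + t *\<^sub>R w)"
        by (rule power2_norm_eq_inner)
      also have "\<dots> = v \<bullet> v + 2 * t * (v \<bullet> w) + t^2 * (w \<bullet> w)"
        by (simp add: inner_add_left inner_add_right inner_commute power2_eq_square algebra_simps)
      finally show ?thesis using w(2) vv by (simp add: power2_norm_eq_inner)
    qed
    ultimately show "2*t*((M *v v) \<bullet> w) + t^2 * (qf M w - lam*(norm w)^2) \<le> 0"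
      using qf_add_vector[OF sym, of v t w] by (simp add: lam_def algebra_simps)
  qed
  define w where "w = M *v v - lam *\<^sub>R v"
  have wS: "w \<in> S" unfolding w_def using S inv v(1) subspace_diff subspace_scale by blast
  have vw: "v \<bullet> w = 0" unfolding w_def lam_def qf_def using vv by (simp add: inner_diff_right)
  hence "(M *v v) \<bullet> w = 0" using perp wS by blast
  hence "w \<bullet> w = 0" using vw by (simp add: w_def inner_diff_left)
  thus ?thesis by (simp add: w_def lam_def)
qed

lemma qf_attains_max_on_sphere:
  fixes M :: "real^'n^'n"
  assumes S: "subspace S" and nz: "dim S \<noteq> 0"
  shows "\<exists>v \<in> S \<inter> sphere 0 1. \<forall>y\<in>S \<inter> sphere 0 1. qf M y \<le> qf M v"
proof (rule continuous_attains_sup)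
  from nz have "\<not> S \<subseteq> {0}" by simp
  then obtain x where x: "x \<in> S" "x \<noteq> 0" by blast
  have "(1 / norm x) *\<^sub>R x \<in> S" by (rule subspace_scale[OF S x(1)])
  hence "(1 / norm x) *\<^sub>R x \<in> S \<inter> sphere 0 1" using x(2) by simp
  thus "S \<inter> sphere 0 1 \<noteq> {}" by blast
  show "compact (S \<inter> sphere 0 1)"
    using closed_subspace[OF S] compact_sphere by (simp add: closed_Int_compact)
  have "continuous_on (S \<inter> sphere 0 1) (\<lambda>y. y \<bullet> (M *v y))"
    by (intro continuous_on_inner continuous_on_id matrix_vector_mult_linear_continuous_on)
  thus "continuous_on (S \<inter> sphere 0 1) (qf M)" by (simp add: qf_def[abs_def])
qed

lemma dim_orthogonal_hyperplane:
  fixes S :: "'a::euclidean_space set"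
  assumes S: "subspace S" and v: "v \<in> S" "v \<bullet> v = 1"
  shows "subspace {y \<in> S. v \<bullet> y = 0}" "dim S = dim {y \<in> S. v \<bullet> y = 0} + 1"
proof -
  define S' where "S' = {y \<in> S. v \<bullet> y = 0}"
  have "S' = S \<inter> {y. orthogonal v y}" unfolding S'_def orthogonal_def by auto
  then show sub': "subspace {y \<in> S. v \<bullet> y = 0}"
    using subspace_inter[OF S subspace_orthogonal_to_vector] by (simp add: S'_def)
  have span_eq: "span (insert v S') = S"
  proof
    show "span (insert v S') \<subseteq> S" using S v by (intro span_minimal) (auto simp: S'_def)
    show "S \<subseteq> span (insert v S')"
    proof
      fix y assume y: "y \<in> S"
      have "y - (v \<bullet> y) *\<^sub>R v \<in> S'" unfolding S'_def using y v S
        by (auto simp: inner_diff_right intro: subspace_diff subspace_scale)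
      hence "(y - (v \<bullet> y) *\<^sub>R v) + (v \<bullet> y) *\<^sub>R v \<in> span (insert v S')"
        by (intro span_add) (simp_all add: span_base span_scale)
      thus "y \<in> span (insert v S')" by simp
    qed
  qed
  have "span S' = S'" using sub' by (simp add: S'_def span_eq_iff)
  moreover have "v \<notin> S'" using v(2) by (simp add: S'_def)
  ultimately have "v \<notin> span S'" by metis
  have "dim S = dim (span (insert v S'))" by (simp only: span_eq)
  also have "\<dots> = dim S' + 1" using dim_insert[of v S'] \<open>v \<notin> span S'\<close> by simp
  finally show "dim S = dim {y \<in> S. v \<bullet> y = 0} + 1" by (simp add: S'_def)
qed

lemma symmetric_orthonormal_eigenbasis:
  fixes M :: "real^'n^'n"
  assumes sym: "transpose M = M"
  shows "subspace S \<Longrightarrow> (\<forall>x\<in>S. M *v x \<in> S) \<Longrightarrow> \<exists>B. finite B \<and> B \<subseteq> S \<and> card B = dim S \<and>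
     (\<forall>b\<in>B. norm b = 1 \<and> M *v b = qf M b *\<^sub>R b) \<and> (\<forall>a\<in>B. \<forall>b\<in>B. a \<noteq> b \<longrightarrow> a \<bullet> b = 0)"
proof (induction "dim S" arbitrary: S rule: less_induct)
  case less
  show ?case
  proof (cases "dim S = 0")
    case True then show ?thesis by (intro exI[of _ "{}"]) auto
  next
    case False
    obtain v where "v \<in> S \<inter> sphere 0 1" "\<forall>y\<in>S \<inter> sphere 0 1. qf M y \<le> qf M v"
      using qf_attains_max_on_sphere[OF less.prems(1) False, of M] by blast
    hence v: "v \<in> S" "norm v = 1" "\<forall>y\<in>S \<inter> sphere 0 1. qf M y \<le> qf M v" by auto
    have vv: "v \<bullet> v = 1" using v(2) by (simp add: norm_eq_1)
    have eig: "M *v v = qf M v *\<^sub>R v"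
      by (rule qf_max_on_sphere_eigenvector[OF sym less.prems v])
    define S' where "S' = {y \<in> S. v \<bullet> y = 0}"
    have sub': "subspace S'" and dimS: "dim S = dim S' + 1"
      using dim_orthogonal_hyperplane[OF less.prems(1) v(1) vv] by (simp_all add: S'_def)
    have inv': "\<forall>y\<in>S'. M *v y \<in> S'"
    proof
      fix y assume y: "y \<in> S'"
      have "v \<bullet> (M *v y) = (M *v v) \<bullet> y" using symmetric_inner_mult[OF sym] by simp
      also have "\<dots> = 0" using y eig by (simp add: S'_def)
      finally show "M *v y \<in> S'" using y less.prems(2) by (simp add: S'_def)
    qed
    obtain B' where B': "finite B'" "B' \<subseteq> S'" "card B' = dim S'"
      "\<forall>b\<in>B'. norm b = 1 \<and> M *v b = qf M b *\<^sub>R b" "\<forall>a\<in>B'. \<forall>b\<in>B'. a \<noteq> b \<longrightarrow> a \<bullet> b = 0"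
    proof -
      have "dim S' < dim S" using dimS by simp
      from less.hyps[OF this sub' inv'] show ?thesis using that by blast
    qed
    have vB': "v \<notin> B'" using B'(2) vv by (auto simp: S'_def)
    show ?thesis
    proof (intro exI[of _ "insert v B'"] conjI)
      show "finite (insert v B')" using B' by simp
      show "insert v B' \<subseteq> S" using B'(2) v(1) by (auto simp: S'_def)
      show "card (insert v B') = dim S" using B' vB' dimS by simp
      show "\<forall>b\<in>insert v B'. norm b = 1 \<and> M *v b = qf M b *\<^sub>R b" using B'(4) v(2) eig by auto
      show "\<forall>a\<in>insert v B'. \<forall>b\<in>insert v B'. a \<noteq> b \<longrightarrow> a \<bullet> b = 0"
        using B'(5) B'(2) by (auto simp: S'_def inner_commute)
    qed
  qed
qed

lemma matrix_mult_diag_mat_entry: "(P ** diag_mat d) $ i $ k = P $ i $ k * (d $ k :: real)"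
  by (simp add: matrix_matrix_mult_def diag_mat_def if_distrib cong: if_cong)

lemma diag_mat_matrix_mult_entry: "(diag_mat d ** P) $ i $ k = (d $ i :: real) * P $ i $ k"
  by (simp add: matrix_matrix_mult_def diag_mat_def if_distrib if_distribR cong: if_cong)

lemma symmetric_spectral_decomposition:
  fixes M :: "real^'n^'n"
  assumes sym: "transpose M = M"
  shows "\<exists>U d. orthogonal_matrix U \<and> M = U ** diag_mat d ** transpose U"
proof -
  obtain B where B: "finite B" "card B = dim (UNIV :: (real^'n) set)"
     "\<forall>b\<in>B. norm b = 1 \<and> M *v b = qf M b *\<^sub>R b" "\<forall>a\<in>B. \<forall>b\<in>B. a \<noteq> b \<longrightarrow> a \<bullet> b = 0"
    using symmetric_orthonormal_eigenbasis[OF sym subspace_UNIV] by auto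
  have "card B = card (UNIV :: 'n set)" using B(2) by simp
  then obtain g where g: "bij_betw g (UNIV :: 'n set) B"
    using finite_same_card_bij[of "UNIV :: 'n set" B] B(1) by auto
  have gB: "g k \<in> B" for k using g by (auto simp: bij_betw_def)
  have ginj: "g k = g l \<Longrightarrow> k = l" for k l using g by (auto simp: bij_betw_def inj_on_def)
  define U :: "real^'n^'n" where "U = (\<chi> i k. g k $ i)"
  define d :: "real^'n" where "d = (\<chi> k. qf M (g k))"
  have "(transpose U ** U) $ k $ l = (if k = l then 1 else 0)" for k l
  proof -
    have "(transpose U ** U) $ k $ l = g k \<bullet> g l"
      by (simp add: matrix_matrix_mult_def transpose_def U_def inner_vec_def)
    also have "\<dots> = (if k = l then 1 else 0)"
      using B(3,4) gB ginj by (cases "k = l") (simp add: norm_eq_1, metis)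
    finally show ?thesis .
  qed
  hence orth: "orthogonal_matrix U" by (simp add: orthogonal_matrix vec_eq_iff mat_def)
  have "(M ** U) $ i $ k = (U ** diag_mat d) $ i $ k" for i k
  proof -
    have "(M ** U) $ i $ k = (M *v g k) $ i"
      by (simp add: matrix_matrix_mult_def matrix_vector_mult_def U_def)
    also have "\<dots> = d $ k * g k $ i" using B(3) gB by (simp add: d_def)
    finally show ?thesis by (simp add: matrix_mult_diag_mat_entry U_def mult.commute)
  qed
  hence MU: "M ** U = U ** diag_mat d" by (simp add: vec_eq_iff)
  have "M = M ** (U ** transpose U)" using orth by (simp add: orthogonal_matrix_def)
  also have "\<dots> = U ** diag_mat d ** transpose U" by (simp add: matrix_mul_assoc MU)
  finally show ?thesis using orth by blast
qed

section \<open>Functional calculus and traces in an eigenbasis\<close>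

lemma orthogonal_matrix_transpose_mult: "orthogonal_matrix U \<Longrightarrow> transpose U ** U = mat 1"
  by (simp add: orthogonal_matrix_def)

lemma orthogonal_matrix_mult_transpose: "orthogonal_matrix U \<Longrightarrow> U ** transpose U = mat 1"
  by (simp add: orthogonal_matrix_def)

text \<open>If two spectral decompositions agree, then \<open>W = V\<^sup>T U\<close> intertwines the two diagonal
  matrices, so \<open>W\<^sub>k\<^sub>j \<noteq> 0\<close> only where \<open>d\<^sub>j = e\<^sub>k\<close>; hence \<open>W\<close> also intertwines \<open>f(d)\<close> and \<open>f(e)\<close>.
  So \<open>mat_fun\<close> does not depend on the chosen decomposition.\<close>

lemma spectral_fun_unique:
  fixes U V :: "real^'n^'n"
  assumes U: "orthogonal_matrix U" and V: "orthogonal_matrix V"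
    and eq: "U ** diag_mat d ** transpose U = V ** diag_mat e ** transpose V"
  shows "U ** diag_mat (\<chi> k. f (d$k)) ** transpose U = V ** diag_mat (\<chi> k. f (e$k)) ** transpose V"
proof -
  define W where "W = transpose V ** U"
  have "W ** diag_mat d = transpose V ** (U ** diag_mat d ** transpose U) ** U"
    by (simp add: W_def matrix_mul_assoc[symmetric] orthogonal_matrix_transpose_mult[OF U])
  also have "\<dots> = transpose V ** (V ** diag_mat e ** transpose V) ** U" by (simp only: eq)
  also have "\<dots> = diag_mat e ** W"
    by (simp add: W_def matrix_mul_assoc orthogonal_matrix_transpose_mult[OF V])
  finally have WD: "W ** diag_mat d = diag_mat e ** W" .
  have "(W ** diag_mat (\<chi> k. f (d$k))) $ k $ j = (diag_mat (\<chi> k. f (e$k)) ** W) $ k $ j" for k j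
  proof -
    have "W $ k $ j * d $ j = e $ k * W $ k $ j"
      using arg_cong[OF WD, of "\<lambda>Z. Z $ k $ j"]
      by (simp add: matrix_mult_diag_mat_entry diag_mat_matrix_mult_entry)
    hence "W $ k $ j = 0 \<or> d $ j = e $ k" by (simp add: mult.commute)
    thus ?thesis by (auto simp: matrix_mult_diag_mat_entry diag_mat_matrix_mult_entry)
  qed
  hence WF: "W ** diag_mat (\<chi> k. f (d$k)) = diag_mat (\<chi> k. f (e$k)) ** W" by (simp add: vec_eq_iff)
  have UVW: "U = V ** W" by (simp add: W_def matrix_mul_assoc orthogonal_matrix_mult_transpose[OF V])
  have "U ** diag_mat (\<chi> k. f (d$k)) ** transpose U = V ** (W ** diag_mat (\<chi> k. f (d$k))) ** transpose U"
    by (simp add: UVW matrix_mul_assoc)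
  also have "\<dots> = V ** diag_mat (\<chi> k. f (e$k)) ** (W ** transpose U)"
    by (simp add: WF matrix_mul_assoc)
  also have "W ** transpose U = transpose V"
    by (simp add: W_def matrix_mul_assoc[symmetric] orthogonal_matrix_mult_transpose[OF U])
  finally show ?thesis .
qed

lemma mat_fun_spectral:
  assumes "orthogonal_matrix U" "M = U ** diag_mat d ** transpose U"
  shows "mat_fun f M = U ** diag_mat (\<chi> k. f (d$k)) ** transpose U"
  unfolding mat_fun_def
proof (rule the_equality)
  show "\<exists>U' d'. orthogonal_matrix U' \<and> M = U' ** diag_mat d' ** transpose U' \<and>
      U ** diag_mat (\<chi> k. f (d$k)) ** transpose U = U' ** diag_mat (\<chi> k. f (d'$k)) ** transpose U'"
    using assms by blast
  fix N assume "\<exists>U' d'. orthogonal_matrix U' \<and> M = U' ** diag_mat d' ** transpose U' \<and>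
      N = U' ** diag_mat (\<chi> k. f (d'$k)) ** transpose U'"
  then obtain U' d' where "orthogonal_matrix U'" "M = U' ** diag_mat d' ** transpose U'"
      "N = U' ** diag_mat (\<chi> k. f (d'$k)) ** transpose U'" by blast
  thus "N = U ** diag_mat (\<chi> k. f (d$k)) ** transpose U"
    using spectral_fun_unique[OF _ assms(1), of U' d' d f] assms(2) by simp
qed

lemma diag_mat_transpose: "transpose (diag_mat d) = (diag_mat d :: real^'n^'n)"
  by (simp add: vec_eq_iff transpose_def diag_mat_def)

lemma diag_mat_mult: "diag_mat a ** diag_mat b = (diag_mat (\<chi> k. a$k * b$k) :: real^'n^'n)"
  by (simp add: vec_eq_iff matrix_mult_diag_mat_entry) (simp add: diag_mat_def)

lemma spectral_transpose:
  "transpose (V ** diag_mat d ** transpose V) = (V ** diag_mat d ** transpose V :: real^'n^'n)"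
  by (simp add: matrix_transpose_mul diag_mat_transpose matrix_mul_assoc)

lemma spectral_mult:
  assumes "orthogonal_matrix V"
  shows "(V ** diag_mat a ** transpose V) ** (V ** diag_mat b ** transpose V)
    = V ** diag_mat (\<chi> k. a$k * b$k) ** transpose (V :: real^'n^'n)"
proof -
  have "(V ** diag_mat a ** transpose V) ** (V ** diag_mat b ** transpose V)
      = V ** diag_mat a ** (transpose V ** V) ** diag_mat b ** transpose V"
    by (simp add: matrix_mul_assoc)
  also have "\<dots> = V ** (diag_mat a ** diag_mat b) ** transpose V"
    by (simp add: orthogonal_matrix_transpose_mult[OF assms] matrix_mul_assoc)
  finally show ?thesis by (simp add: diag_mat_mult)
qed

lemma trace_diag_mat_conj:
  fixes W :: "real^'n^'n"
  shows "trace (diag_mat a ** W ** diag_mat b ** transpose W) = (\<Sum>j\<in>UNIV. \<Sum>k\<in>UNIV. (W$j$k)^2 * a$j * b$k)"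
proof -
  have "trace (diag_mat a ** W ** diag_mat b ** transpose W)
      = (\<Sum>j\<in>UNIV. \<Sum>k\<in>UNIV. (diag_mat a ** W ** diag_mat b) $ j $ k * W $ j $ k)"
    by (simp add: trace_def matrix_matrix_mult_def transpose_def)
  also have "\<dots> = (\<Sum>j\<in>UNIV. \<Sum>k\<in>UNIV. (W$j$k)^2 * a$j * b$k)"
    by (simp add: matrix_mult_diag_mat_entry diag_mat_matrix_mult_entry power2_eq_square mult_ac)
  finally show ?thesis .
qed

lemma trace_spectral_mult:
  fixes U V :: "real^'n^'n"
  assumes U: "orthogonal_matrix U" and V: "orthogonal_matrix V"
  shows "trace ((V ** diag_mat a ** transpose V) ** (U ** diag_mat b ** transpose U)) =
     (\<Sum>j\<in>UNIV. \<Sum>k\<in>UNIV. ((transpose V ** U)$j$k)^2 * a$j * b$k)"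
proof -
  define W where "W = transpose V ** U"
  have "trace ((V ** diag_mat a ** transpose V) ** (U ** diag_mat b ** transpose U)) =
        trace (V ** (diag_mat a ** transpose V ** U ** diag_mat b ** transpose U))"
    by (simp add: matrix_mul_assoc)
  also have "\<dots> = trace ((diag_mat a ** transpose V ** U ** diag_mat b ** transpose U) ** V)"
    by (rule trace_mul_sym)
  also have "\<dots> = trace (diag_mat a ** W ** diag_mat b ** transpose W)"
    by (simp add: W_def matrix_transpose_mul matrix_mul_assoc)
  also have "\<dots> = (\<Sum>j\<in>UNIV. \<Sum>k\<in>UNIV. (W$j$k)^2 * a$j * b$k)" by (rule trace_diag_mat_conj)
  finally show ?thesis by (simp add: W_def)
qed

lemma trace_spectral:
  fixes V :: "real^'n^'n"
  assumes V: "orthogonal_matrix V"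
  shows "trace (V ** diag_mat a ** transpose V) = (\<Sum>j\<in>UNIV. a$j)"
proof -
  have "trace (V ** diag_mat a ** transpose V) = trace (V ** (diag_mat a ** transpose V))"
    by (simp add: matrix_mul_assoc)
  also have "\<dots> = trace ((diag_mat a ** transpose V) ** V)" by (rule trace_mul_sym)
  also have "\<dots> = trace (diag_mat a)"
    by (simp add: matrix_mul_assoc[symmetric] orthogonal_matrix_transpose_mult[OF V])
  finally show ?thesis by (simp add: trace_def diag_mat_def)
qed

lemma orthogonal_change_of_basis_sums:
  fixes U V :: "real^'n^'n"
  assumes U: "orthogonal_matrix U" and V: "orthogonal_matrix V"
  shows "(\<Sum>k\<in>UNIV. ((transpose V ** U)$j$k)^2) = 1"
proof -
  define W where "W = transpose V ** U"
  have "W ** transpose W = mat 1"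
    by (simp add: W_def matrix_transpose_mul matrix_mul_assoc)
       (simp add: matrix_mul_assoc[symmetric] orthogonal_matrix_mult_transpose[OF U]
         orthogonal_matrix_transpose_mult[OF V])
  hence "(W ** transpose W) $ j $ j = 1" by (simp add: mat_def)
  thus ?thesis by (simp add: W_def matrix_matrix_mult_def transpose_def power2_eq_square)
qed

lemma diag_mat_vector_mult: "diag_mat a *v z = (\<chi> j. (a$j::real) * z$j)"
  by (simp add: vec_eq_iff matrix_vector_mult_def diag_mat_def if_distrib if_distribR cong: if_cong)

lemma qf_spectral:
  fixes V :: "real^'n^'n"
  shows "qf (V ** diag_mat a ** transpose V) x = (\<Sum>j\<in>UNIV. a$j * ((transpose V *v x)$j)^2)"
proof -
  define y where "y = transpose V *v x"
  have "qf (V ** diag_mat a ** transpose V) x = x \<bullet> (V *v (diag_mat a *v y))"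
    by (simp add: qf_def y_def matrix_vector_mul_assoc matrix_mul_assoc del: transpose_matrix_vector)
  also have "\<dots> = y \<bullet> (diag_mat a *v y)"
    unfolding y_def by (simp add: dot_lmul_matrix)
  also have "\<dots> = (\<Sum>j\<in>UNIV. a$j * (y$j)^2)"
    by (simp add: diag_mat_vector_mult inner_vec_def power2_eq_square mult_ac)
  finally show ?thesis by (simp add: y_def)
qed

lemma qf_spectral_column:
  fixes U V :: "real^'n^'n"
  shows "qf (V ** diag_mat a ** transpose V) (U *v axis k 1) = (\<Sum>j\<in>UNIV. a$j * ((transpose V ** U)$j$k)^2)"
proof -
  have "transpose V *v (U *v axis k 1) = (transpose V ** U) *v axis k 1"
    by (simp add: matrix_vector_mul_assoc del: transpose_matrix_vector)
  moreover have "((transpose V ** U) *v axis k 1) $ j = (transpose V ** U)$j$k" for j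
    by (simp add: matrix_vector_mult_def axis_def if_distrib if_distribR cong: if_cong)
  ultimately show ?thesis using qf_spectral[of V a "U *v axis k 1"] by (simp del: transpose_matrix_vector)
qed

lemma qf_spectral_eigenvector:
  fixes V :: "real^'n^'n"
  assumes "orthogonal_matrix V"
  shows "qf (V ** diag_mat a ** transpose V) (V *v axis j 1) = a $ j"
  using qf_spectral_column[of V a V j]
  by (simp add: orthogonal_matrix_transpose_mult[OF assms] mat_def if_distrib if_distribR cong: if_cong)

lemma psd_spectral_eigenvalue_nonneg:
  fixes V :: "real^'n^'n"
  assumes "orthogonal_matrix V" "psd (V ** diag_mat a ** transpose V)"
  shows "0 \<le> a $ j"
  using assms qf_spectral_eigenvector[OF assms(1)] by (metis psd_def)

lemma density_matrix_spectral:
  fixes \<rho> :: "real^'n^'n"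
  assumes "density_matrix \<rho>"
  obtains V lam where "orthogonal_matrix V" "\<rho> = V ** diag_mat lam ** transpose V"
    "\<And>j. 0 \<le> lam$j" "(\<Sum>j\<in>UNIV. lam$j) = 1"
proof -
  have psd: "psd \<rho>" and tr: "trace \<rho> = 1" using assms by (auto simp: density_matrix_def)
  obtain V lam where V: "orthogonal_matrix V" "\<rho> = V ** diag_mat lam ** transpose V"
    using symmetric_spectral_decomposition[OF psd_symmetric[OF psd]] by blast
  show ?thesis
  proof (rule that[OF V])
    show "0 \<le> lam$j" for j using psd_spectral_eigenvalue_nonneg[OF V(1)] psd V(2) by simp
    show "(\<Sum>j\<in>UNIV. lam$j) = 1" using tr trace_spectral[OF V(1)] V(2) by simp
  qed
qed

lemma density_matrix_sum:
  fixes \<rho> :: "nat \<Rightarrow> real^'n^'n"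
  assumes \<beta>: "\<And>i. i<m \<Longrightarrow> 0 \<le> \<beta> i" and dens: "\<And>i. i<m \<Longrightarrow> density_matrix (\<rho> i)"
    and sum1: "(\<Sum>i<m. \<beta> i) = 1"
  shows "density_matrix (\<Sum>l<m. \<beta> l *\<^sub>R \<rho> l)"
proof -
  define R where "R = (\<Sum>l<m. \<beta> l *\<^sub>R \<rho> l)"
  have sym: "transpose (\<rho> l) = \<rho> l" if "l<m" for l
    using dens[OF that] by (simp add: density_matrix_def psd_symmetric)
  have "transpose R $ i $ j = R $ i $ j" for i j
    unfolding R_def transpose_def using symmetric_entry[OF sym] by (simp add: sum_component)
  hence "transpose R = R" by (simp add: vec_eq_iff)
  moreover have "0 \<le> qf R u" for u
  proof -
    have "qf R u = (\<Sum>l<m. \<beta> l * qf (\<rho> l) u)" unfolding R_def by (rule qf_sum_scaleR) simp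
    also have "\<dots> \<ge> 0" using \<beta> dens by (intro sum_nonneg) (auto simp: density_matrix_def psd_def)
    finally show ?thesis .
  qed
  moreover have "trace R = 1"
  proof -
    have "trace R = (\<Sum>i\<in>UNIV. \<Sum>l<m. \<beta> l * \<rho> l $ i $ i)" unfolding R_def trace_def by (simp add: sum_component)
    also have "\<dots> = (\<Sum>l<m. \<beta> l * trace (\<rho> l))" by (subst sum.swap) (simp add: trace_def sum_distrib_left)
    also have "\<dots> = (\<Sum>l<m. \<beta> l)" using dens by (intro sum.cong) (auto simp: density_matrix_def)
    finally show ?thesis using sum1 by simp
  qed
  ultimately show ?thesis unfolding R_def[symmetric] by (simp add: density_matrix_def psd_def symmetric_mat_def)
qed

lemma psd_qf_sum_of_squares:
  fixes P :: "real^'n^'n"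
  assumes "psd P"
  obtains L :: "'n \<Rightarrow> real^'n" where "\<And>x. qf P x = (\<Sum>k\<in>UNIV. (L k \<bullet> x)^2)"
proof -
  obtain U d where U: "orthogonal_matrix U" "P = U ** diag_mat d ** transpose U"
    using symmetric_spectral_decomposition[OF psd_symmetric[OF assms]] by blast
  have d: "0 \<le> d$k" for k using psd_spectral_eigenvalue_nonneg[OF U(1)] assms U(2) by simp
  define L where "L k = (\<chi> i. sqrt (d$k) * U$i$k)" for k
  have "qf P x = (\<Sum>k\<in>UNIV. (L k \<bullet> x)^2)" for x
  proof -
    have "qf P x = (\<Sum>k\<in>UNIV. d$k * ((transpose U *v x)$k)^2)" using qf_spectral U(2) by simp
    also have "\<dots> = (\<Sum>k\<in>UNIV. (L k \<bullet> x)^2)"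
    proof (rule sum.cong[OF refl])
      fix k
      have "L k \<bullet> x = sqrt (d$k) * (transpose U *v x)$k"
        by (simp add: L_def inner_vec_def matrix_vector_mult_def transpose_def sum_distrib_left mult_ac
             del: transpose_matrix_vector)
      thus "d$k * ((transpose U *v x)$k)^2 = (L k \<bullet> x)^2" using d[of k] by (simp add: power_mult_distrib)
    qed
    finally show ?thesis .
  qed
  thus ?thesis by (rule that)
qed

lemma psd_outer: "psd (outer (v::real^'n))"
proof -
  have "qf (outer v) x = (v \<bullet> x)^2" for x
  proof -
    have "qf (outer v) x = (\<Sum>i\<in>UNIV. \<Sum>j\<in>UNIV. (x$i * v$i) * (v$j * x$j))"
      by (simp add: qf_def outer_def inner_vec_def matrix_vector_mult_def sum_distrib_left mult_ac)
    also have "\<dots> = (\<Sum>i\<in>UNIV. x$i * v$i) * (\<Sum>j\<in>UNIV. v$j * x$j)" by (simp add: sum_product)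
    finally show ?thesis by (simp add: inner_vec_def power2_eq_square mult.commute)
  qed
  moreover have "transpose (outer v) = outer v" by (simp add: outer_def transpose_def vec_eq_iff mult.commute)
  ultimately show ?thesis by (simp add: psd_def symmetric_mat_def)
qed

section \<open>A Pinsker-type inequality for the relative entropy\<close>

lemma hellinger_le_ln_ratio:
  fixes l p :: real
  assumes "l \<ge> 0" "p > 0"
  shows "2*l - 2 * sqrt l * sqrt p \<le> l * (ln l - ln p)"
proof (cases "l = 0")
  case True thus ?thesis by simp
next
  case False
  hence l: "l > 0" using assms by simp
  define q where "q = sqrt (p/l)"
  have "ln q \<le> q - 1" unfolding q_def using assms l by (intro ln_le_minus_one) simp
  moreover have "ln q = (ln p - ln l)/2" unfolding q_def using assms l by (simp add: ln_sqrt ln_div)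
  moreover have "q = sqrt l * sqrt p / l" unfolding q_def using assms l by (simp add: real_sqrt_divide field_simps)
  ultimately have "(ln p - ln l)/2 \<le> sqrt l * sqrt p / l - 1" by linarith
  hence "l * ((ln p - ln l)/2) \<le> l * (sqrt l * sqrt p / l - 1)"
    using l by (intro mult_left_mono) simp_all
  moreover have "l * (sqrt l * sqrt p / l - 1) = sqrt l * sqrt p - l" using l by (simp add: field_simps)
  ultimately have "l * ((ln p - ln l)/2) \<le> sqrt l * sqrt p - l" by simp
  thus ?thesis by (simp add: field_simps)
qed

lemma le_of_linear_le_quadratic:
  fixes A B c :: real
  assumes "\<And>t. 2*t*B \<le> c*A + c*t^2*B" "c \<ge> 0" "B \<ge> 0"
  shows "B \<le> c^2 * A"
proof (cases "c = 0")
  case True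
  thus ?thesis using assms(1)[of 1] assms(3) by simp
next
  case False
  hence c: "c > 0" using assms(2) by simp
  have "2*(1/c)*B \<le> c*A + c*(1/c)^2*B" by (rule assms(1))
  hence "B/c \<le> c*A" using c by (simp add: power2_eq_square field_simps)
  thus ?thesis using c by (simp add: power2_eq_square field_simps)
qed

text \<open>Polarization: for symmetric \<open>M\<close>, a bound \<open>|x\<^sup>T M x| \<le> c |x|\<^sup>2\<close> bounds the operator norm by \<open>c\<close>;
  compare the quadratic form at \<open>v \<plusminus> t M v\<close>.\<close>

lemma symmetric_qf_bound_imp_norm_bound:
  fixes M :: "real^'n^'n"
  assumes sym: "transpose M = M" and c: "c \<ge> 0" and b: "\<And>v. \<bar>qf M v\<bar> \<le> c * (v \<bullet> v)"
  shows "(M *v v) \<bullet> (M *v v) \<le> c^2 * (v \<bullet> v)"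
proof (rule le_of_linear_le_quadratic[OF _ c])
  show "0 \<le> (M *v v) \<bullet> (M *v v)" by simp
  fix t :: real
  define w where "w = M *v v"
  have norm_expand: "(v + r *\<^sub>R w) \<bullet> (v + r *\<^sub>R w) = v \<bullet> v + 2*r*(v \<bullet> w) + r^2 * (w \<bullet> w)" for r
    by (simp add: inner_add_left inner_add_right inner_commute power2_eq_square algebra_simps)
  have "qf M (v + t *\<^sub>R w) \<le> c * ((v + t *\<^sub>R w) \<bullet> (v + t *\<^sub>R w))" using b abs_le_D1 by blast
  moreover have "- qf M (v + (-t) *\<^sub>R w) \<le> c * ((v + (-t) *\<^sub>R w) \<bullet> (v + (-t) *\<^sub>R w))"
    using b abs_le_D2 by blast
  ultimately have "4*t*((M *v v) \<bullet> w) \<le> c * (2 * (v \<bullet> v) + 2 * t^2 * (w \<bullet> w))"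
    unfolding qf_add_vector[OF sym] norm_expand by (simp add: algebra_simps)
  thus "2*t*((M *v v) \<bullet> (M *v v)) \<le> c * (v \<bullet> v) + c * t^2 * ((M *v v) \<bullet> (M *v v))"
    by (simp add: w_def algebra_simps)
qed

lemma trace_mult_symmetric_sq_le:
  fixes M X Y :: "real^'n^'n"
  assumes sM: "transpose M = M" and sX: "transpose X = X" and sY: "transpose Y = Y"
    and b: "\<And>v. (M *v v) \<bullet> (M *v v) \<le> c * (v \<bullet> v)"
  shows "(trace (M ** (X ** Y)))^2 \<le> c * (X \<bullet> X) * (Y \<bullet> Y)"
proof -
  have "trace (M ** (X ** Y)) = trace (transpose (M ** (X ** Y)))" by (simp add: trace_transpose)
  also have "\<dots> = trace (Y ** (X ** M))" using sM sX sY by (simp add: matrix_transpose_mul matrix_mul_assoc)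
  also have "\<dots> = trace ((X ** M) ** Y)" by (rule trace_mul_sym)
  also have "\<dots> = (X ** M) \<bullet> Y" using sY by (simp add: trace_matrix_mult_eq_inner)
  finally have t: "trace (M ** (X ** Y)) = (X ** M) \<bullet> Y" .
  have rows: "(X ** M) $ a = M *v (X $ a)" for a
    using symmetric_entry[OF sM]
    by (simp add: vec_eq_iff matrix_matrix_mult_def matrix_vector_mult_def mult.commute)
  have "(X ** M) \<bullet> (X ** M) = (\<Sum>a\<in>UNIV. (M *v (X $ a)) \<bullet> (M *v (X $ a)))"
    by (simp add: inner_vec_def[of "X ** M"] rows)
  also have "\<dots> \<le> (\<Sum>a\<in>UNIV. c * ((X $ a) \<bullet> (X $ a)))" by (rule sum_mono) (rule b)
  also have "\<dots> = c * (X \<bullet> X)" by (simp add: inner_vec_def[of X] sum_distrib_left)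
  finally have xm: "(X ** M) \<bullet> (X ** M) \<le> c * (X \<bullet> X)" .
  have "(trace (M ** (X ** Y)))^2 \<le> ((X ** M) \<bullet> (X ** M)) * (Y \<bullet> Y)"
    unfolding t by (rule Cauchy_Schwarz_ineq)
  also have "\<dots> \<le> c * (X \<bullet> X) * (Y \<bullet> Y)" using xm by (simp add: mult_right_mono)
  finally show ?thesis .
qed

text \<open>With \<open>M = A - I/2\<close> (so \<open>\<parallel>M\<parallel> \<le> 1/2\<close>) and
  \<open>X\<^sup>2 - Y\<^sup>2 = ((X - Y)(X + Y) + (X + Y)(X - Y))/2\<close>, Cauchy--Schwarz gives
  \<open>tr(A(X\<^sup>2 - Y\<^sup>2))\<^sup>2 \<le> \<parallel>X - Y\<parallel>\<^sup>2 \<parallel>X + Y\<parallel>\<^sup>2 / 4 = 1 - tr(XY)\<^sup>2\<close>.\<close>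

lemma trace_mult_diff_squares_bound:
  fixes A X Y :: "real^'n^'n"
  assumes A: "psd A" "below_id A" and sX: "transpose X = X" and sY: "transpose Y = Y"
    and trX: "trace (X ** X) = 1" and trY: "trace (Y ** Y) = 1"
  shows "(trace (A ** (X ** X - Y ** Y)))^2 \<le> 1 - (trace (X ** Y))^2"
proof -
  define t where "t = trace (X ** Y)"
  have tYX: "trace (Y ** X) = t" unfolding t_def by (rule trace_mul_sym)
  define D where "D = X - Y"
  define S where "S = X + Y"
  have sD: "transpose D = D" unfolding D_def using sX sY by (simp add: transpose_diff)
  have sS: "transpose S = S" unfolding S_def using sX sY by (simp add: transpose_add)
  have DD: "D \<bullet> D = 2 - 2*t"
    using trace_matrix_mult_eq_inner[of D D] sD trX trY tYX
    by (simp add: D_def t_def matrix_diff_ldistrib matrix_diff_rdistrib trace_sub)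
  have SS: "S \<bullet> S = 2 + 2*t"
    using trace_matrix_mult_eq_inner[of S S] sS trX trY tYX
    by (simp add: S_def t_def matrix_add_ldistrib matrix_add_rdistrib trace_add)
  define M where "M = A - (1/2) *\<^sub>R mat 1"
  have sM: "transpose M = M" unfolding M_def using psd_symmetric[OF A(1)]
    by (simp add: transpose_diff transpose_scalar)
  have "\<bar>qf M v\<bar> \<le> (1/2) * (v \<bullet> v)" for v
  proof -
    have "qf M v = qf A v - (1/2) * (v \<bullet> v)" by (simp add: M_def qf_diff qf_scaleR qf_mat_1)
    thus ?thesis using psd_below_id_qf_bounds[OF A, of v] by (intro abs_leI) linarith+
  qed
  hence "(M *v v) \<bullet> (M *v v) \<le> (1/2)^2 * (v \<bullet> v)" for v
    by (intro symmetric_qf_bound_imp_norm_bound[OF sM]) simp_all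
  hence CS: "(trace (M ** (D ** S)))^2 \<le> (1/2)^2 * (D \<bullet> D) * (S \<bullet> S)"
    by (rule trace_mult_symmetric_sq_le[OF sM sD sS])
  have "trace (M ** (X ** Y)) = trace (M ** (Y ** X))"
  proof -
    have "trace (M ** (X ** Y)) = trace (transpose (M ** (X ** Y)))" by (simp add: trace_transpose)
    also have "\<dots> = trace (Y ** X ** M)" using sM sX sY by (simp add: matrix_transpose_mul matrix_mul_assoc)
    finally show ?thesis by (metis trace_mul_sym)
  qed
  hence "trace (M ** (D ** S)) = trace (M ** (X ** X - Y ** Y))"
    by (simp add: D_def S_def matrix_diff_rdistrib matrix_add_ldistrib matrix_diff_ldistrib
        trace_add trace_sub)
  also have "\<dots> = trace (A ** (X ** X - Y ** Y))"
    using trX trY by (simp add: M_def matrix_diff_rdistrib scalar_matrix_assoc[symmetric]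
        matrix_diff_ldistrib trace_sub trace_scaleR)
  finally have "trace (M ** (D ** S)) = trace (A ** (X ** X - Y ** Y))" .
  with CS DD SS show ?thesis by (simp add: t_def power2_eq_square algebra_simps)
qed

lemma trace_mult_mat_fun_spectral:
  fixes U V :: "real^'n^'n"
  assumes U: "orthogonal_matrix U" and V: "orthogonal_matrix V"
    and r: "\<rho> = V ** diag_mat lam ** transpose V" and R: "R = U ** diag_mat p ** transpose U"
  shows "trace (\<rho> ** mat_fun f R) = (\<Sum>j\<in>UNIV. \<Sum>k\<in>UNIV. ((transpose V ** U)$j$k)^2 * lam$j * f (p$k))"
  unfolding mat_fun_spectral[OF U R] r using trace_spectral_mult[OF U V, of lam "\<chi> k. f (p$k)"] by simp

lemma density_matrix_sqrt:
  assumes "density_matrix \<rho>"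
  shows "transpose (mat_fun sqrt \<rho>) = mat_fun sqrt \<rho>" "mat_fun sqrt \<rho> ** mat_fun sqrt \<rho> = \<rho>"
    "trace (mat_fun sqrt \<rho> ** mat_fun sqrt \<rho>) = 1"
proof -
  obtain V lam where V: "orthogonal_matrix V" "\<rho> = V ** diag_mat lam ** transpose V" "\<And>j. 0 \<le> lam$j"
    using density_matrix_spectral[OF assms] by blast
  have sq: "(\<chi> k. (\<chi> k. sqrt (lam$k))$k * (\<chi> k. sqrt (lam$k))$k) = lam"
    using V(3) by (simp add: vec_eq_iff)
  show "transpose (mat_fun sqrt \<rho>) = mat_fun sqrt \<rho>"
    by (simp add: mat_fun_spectral[OF V(1,2)] spectral_transpose)
  show sqrt_sq: "mat_fun sqrt \<rho> ** mat_fun sqrt \<rho> = \<rho>"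
    unfolding mat_fun_spectral[OF V(1,2)] spectral_mult[OF V(1)] sq by (rule V(2)[symmetric])
  show "trace (mat_fun sqrt \<rho> ** mat_fun sqrt \<rho>) = 1"
    using assms by (simp add: sqrt_sq density_matrix_def)
qed

lemma relative_entropy_spectral:
  fixes U V :: "real^'n^'n"
  assumes U: "orthogonal_matrix U" and V: "orthogonal_matrix V"
    and r: "\<rho> = V ** diag_mat lam ** transpose V" and R: "R = U ** diag_mat p ** transpose U"
  shows "trace (\<rho> ** mat_fun ln \<rho>) - trace (\<rho> ** mat_fun ln R)
    = (\<Sum>j\<in>UNIV. \<Sum>k\<in>UNIV. ((transpose V ** U)$j$k)^2 * (lam$j * (ln (lam$j) - ln (p$k))))"
proof -
  define W where "W = transpose V ** U"
  have "trace (\<rho> ** mat_fun ln \<rho>) = (\<Sum>j\<in>UNIV. lam$j * ln (lam$j))"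
    using trace_mult_mat_fun_spectral[OF V V r r, of ln]
    by (simp add: orthogonal_matrix_transpose_mult[OF V] mat_def if_distrib if_distribR cong: if_cong)
  also have "\<dots> = (\<Sum>j\<in>UNIV. \<Sum>k\<in>UNIV. (W$j$k)^2 * (lam$j * ln (lam$j)))"
    using orthogonal_change_of_basis_sums[OF U V] by (simp add: W_def sum_distrib_right[symmetric])
  finally show ?thesis
    using trace_mult_mat_fun_spectral[OF U V r R, of ln]
    by (simp add: W_def sum_subtractf[symmetric] algebra_simps)
qed

text \<open>Domination \<open>c \<rho> \<le> R\<close> rules out weight of \<open>\<rho>\<close> on the kernel of \<open>R\<close>, where \<open>ln\<close> has its
  junk value \<open>ln 0 = 0\<close>; without it the bound below fails.\<close>

lemma dominated_kernel_weight:
  fixes U V :: "real^'n^'n"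
  assumes c: "c > 0" and dom: "\<And>u. c * qf \<rho> u \<le> qf R u" and U: "orthogonal_matrix U"
    and R: "R = U ** diag_mat p ** transpose U" and r: "\<rho> = V ** diag_mat lam ** transpose V"
    and lam: "\<And>j. 0 \<le> lam$j" and pk: "p$k = 0"
  shows "((transpose V ** U)$j$k)^2 * lam$j = 0"
proof -
  define W where "W = transpose V ** U"
  have "c * (\<Sum>j\<in>UNIV. lam$j * (W$j$k)^2) \<le> 0"
    using dom[of "U *v axis k 1"] qf_spectral_column[of V lam U k] qf_spectral_eigenvector[OF U]
      r R pk by (simp add: W_def)
  hence "(\<Sum>j\<in>UNIV. lam$j * (W$j$k)^2) \<le> 0" using c by (simp add: mult_le_0_iff)
  moreover have nn: "\<forall>j\<in>UNIV. 0 \<le> lam$j * (W$j$k)^2" using lam by simp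
  ultimately have "(\<Sum>j\<in>UNIV. lam$j * (W$j$k)^2) = 0" by (meson antisym sum_nonneg)
  thus ?thesis using nn sum_nonneg_eq_0_iff[of UNIV "\<lambda>j. lam$j * (W$j$k)^2"]
    by (simp add: W_def mult.commute)
qed

lemma relative_entropy_ge_hellinger:
  fixes \<rho> R :: "real^'n^'n"
  assumes d\<rho>: "density_matrix \<rho>" and dR: "density_matrix R"
    and c: "c > 0" and dom: "\<And>u. c * qf \<rho> u \<le> qf R u"
  shows "2 - 2 * trace (mat_fun sqrt \<rho> ** mat_fun sqrt R)
    \<le> trace (\<rho> ** mat_fun ln \<rho>) - trace (\<rho> ** mat_fun ln R)"
proof -
  obtain V lam where V: "orthogonal_matrix V" "\<rho> = V ** diag_mat lam ** transpose V"
      "\<And>j. 0 \<le> lam$j" "(\<Sum>j\<in>UNIV. lam$j) = 1"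
    using density_matrix_spectral[OF d\<rho>] by blast
  obtain U p where U: "orthogonal_matrix U" "R = U ** diag_mat p ** transpose U"
      "\<And>j. 0 \<le> p$j" "(\<Sum>j\<in>UNIV. p$j) = 1"
    using density_matrix_spectral[OF dR] by blast
  define W where "W = transpose V ** U"
  have kernel: "(W$j$k)^2 * lam$j = 0" if "p$k = 0" for j k
    unfolding W_def using dominated_kernel_weight[OF c dom U(1) U(2) V(2) V(3) that] .
  have "(\<Sum>j\<in>UNIV. \<Sum>k\<in>UNIV. (W$j$k)^2 * (2*lam$j - 2 * sqrt (lam$j) * sqrt (p$k)))
      \<le> (\<Sum>j\<in>UNIV. \<Sum>k\<in>UNIV. (W$j$k)^2 * (lam$j * (ln (lam$j) - ln (p$k))))"
  proof (intro sum_mono)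
    fix j k
    show "(W$j$k)^2 * (2*lam$j - 2 * sqrt (lam$j) * sqrt (p$k)) \<le> (W$j$k)^2 * (lam$j * (ln (lam$j) - ln (p$k)))"
    proof (cases "p$k = 0")
      case True thus ?thesis using kernel[OF True, of j] by auto
    next
      case False hence "p$k > 0" using U(3) by (metis less_eq_real_def)
      from hellinger_le_ln_ratio[OF V(3) this] show ?thesis by (simp add: mult_left_mono)
    qed
  qed
  moreover have "(\<Sum>j\<in>UNIV. \<Sum>k\<in>UNIV. (W$j$k)^2 * (2*lam$j - 2 * sqrt (lam$j) * sqrt (p$k)))
      = 2 - 2 * trace (mat_fun sqrt \<rho> ** mat_fun sqrt R)"
  proof -
    have "(\<Sum>j\<in>UNIV. \<Sum>k\<in>UNIV. (W$j$k)^2 * lam$j) = 1"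
      using orthogonal_change_of_basis_sums[OF U(1) V(1)] V(4)
      by (simp add: W_def sum_distrib_right[symmetric])
    moreover have "trace (mat_fun sqrt \<rho> ** mat_fun sqrt R)
        = (\<Sum>j\<in>UNIV. \<Sum>k\<in>UNIV. (W$j$k)^2 * sqrt (lam$j) * sqrt (p$k))"
      unfolding mat_fun_spectral[OF V(1,2)] mat_fun_spectral[OF U(1,2)] W_def
      using trace_spectral_mult[OF U(1) V(1)] by simp
    moreover have "(\<Sum>j\<in>UNIV. \<Sum>k\<in>UNIV. (W$j$k)^2 * (2*lam$j - 2 * sqrt (lam$j) * sqrt (p$k)))
        = 2 * (\<Sum>j\<in>UNIV. \<Sum>k\<in>UNIV. (W$j$k)^2 * lam$j)
          - 2 * (\<Sum>j\<in>UNIV. \<Sum>k\<in>UNIV. (W$j$k)^2 * sqrt (lam$j) * sqrt (p$k))"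
      by (simp add: sum_subtractf sum_distrib_left algebra_simps)
    ultimately show ?thesis by simp
  qed
  ultimately show ?thesis
    unfolding relative_entropy_spectral[OF U(1) V(1) V(2) U(2)] W_def[symmetric] by simp
qed

lemma pinsker_trace_bound:
  fixes \<rho> R A :: "real^'n^'n"
  assumes d\<rho>: "density_matrix \<rho>" and dR: "density_matrix R" and A: "psd A" "below_id A"
    and c: "c > 0" and dom: "\<And>u. c * qf \<rho> u \<le> qf R u"
  shows "(trace (A ** (\<rho> - R)))^2 \<le> trace (\<rho> ** mat_fun ln \<rho>) - trace (\<rho> ** mat_fun ln R)"
proof -
  define t where "t = trace (mat_fun sqrt \<rho> ** mat_fun sqrt R)"
  note sq\<rho> = density_matrix_sqrt[OF d\<rho>] and sqR = density_matrix_sqrt[OF dR]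
  have "(trace (A ** (\<rho> - R)))^2 \<le> 1 - t^2"
    using trace_mult_diff_squares_bound[OF A sq\<rho>(1) sqR(1) sq\<rho>(3) sqR(3)]
    by (simp add: sq\<rho>(2) sqR(2) t_def)
  also have "\<dots> \<le> 2 - 2*t" using zero_le_power2[of "t-1"] by (simp add: power2_diff)
  also have "\<dots> \<le> trace (\<rho> ** mat_fun ln \<rho>) - trace (\<rho> ** mat_fun ln R)"
    unfolding t_def by (rule relative_entropy_ge_hellinger[OF d\<rho> dR c dom])
  finally show ?thesis .
qed

lemma weighted_mean_sq_le:
  fixes \<beta> a :: "'a \<Rightarrow> real"
  assumes "\<And>i. i \<in> I \<Longrightarrow> 0 \<le> \<beta> i" "sum \<beta> I = 1"
  shows "(\<Sum>i\<in>I. \<beta> i * a i)^2 \<le> (\<Sum>i\<in>I. \<beta> i * (a i)^2)"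
proof -
  have "(\<Sum>i\<in>I. \<beta> i * a i)^2 = (\<Sum>i\<in>I. sqrt (\<beta> i) * (sqrt (\<beta> i) * a i))^2"
    using assms(1) by (simp add: mult.assoc[symmetric])
  also have "\<dots> \<le> (\<Sum>i\<in>I. (sqrt (\<beta> i))^2) * (\<Sum>i\<in>I. (sqrt (\<beta> i) * a i)^2)"
    by (rule Cauchy_Schwarz_ineq_sum)
  also have "\<dots> = (\<Sum>i\<in>I. \<beta> i * (a i)^2)"
    using assms by (simp add: power_mult_distrib)
  finally show ?thesis .
qed

text \<open>With \<open>R = \<Sum>\<^sub>i \<beta>\<^sub>i \<rho>\<^sub>i\<close>, the entropy gap \<open>H(R) - \<Sum>\<^sub>i \<beta>\<^sub>i H(\<rho>\<^sub>i)\<close> equals \<open>\<Sum>\<^sub>i \<beta>\<^sub>i D(\<rho>\<^sub>i \<parallel> R)\<close>,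
  and \<open>\<beta>\<^sub>i \<rho>\<^sub>i \<le> R\<close> supplies the domination needed above.\<close>

lemma mixture_trace_deviation_le:
  fixes A \<rho> :: "nat \<Rightarrow> real^'n^'n" and \<beta> :: "nat \<Rightarrow> real"
  assumes A: "\<And>i. i<m \<Longrightarrow> psd (A i) \<and> below_id (A i)"
    and \<beta>: "\<And>i. i<m \<Longrightarrow> 0 \<le> \<beta> i" and dens: "\<And>i. i<m \<Longrightarrow> density_matrix (\<rho> i)"
    and sum1: "(\<Sum>i<m. \<beta> i) = 1"
    and ent: "(\<Sum>i<m. \<beta> i * vn_entropy (\<rho> i)) \<ge> vn_entropy (\<Sum>i<m. \<beta> i *\<^sub>R \<rho> i) - \<epsilon>^2"
    and eps: "\<epsilon> \<ge> 0"
  shows "(\<Sum>i<m. \<beta> i * trace (A i ** (\<rho> i - (\<Sum>l<m. \<beta> l *\<^sub>R \<rho> l)))) \<le> \<epsilon>"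
proof -
  define R where "R = (\<Sum>l<m. \<beta> l *\<^sub>R \<rho> l)"
  have dR: "density_matrix R" unfolding R_def by (rule density_matrix_sum[OF \<beta> dens sum1])
  define a where "a i = trace (A i ** (\<rho> i - R))" for i
  define D where "D i = trace (\<rho> i ** mat_fun ln (\<rho> i)) - trace (\<rho> i ** mat_fun ln R)" for i
  have aD: "\<beta> i * (a i)^2 \<le> \<beta> i * D i" if i: "i<m" for i
  proof (cases "\<beta> i = 0")
    case True thus ?thesis by simp
  next
    case False
    hence bpos: "\<beta> i > 0" using \<beta>[OF i] by simp
    have "\<beta> i * qf (\<rho> i) u \<le> qf R u" for u
    proof -
      have "\<beta> i * qf (\<rho> i) u \<le> (\<Sum>l<m. \<beta> l * qf (\<rho> l) u)"
        using i \<beta> dens by (intro member_le_sum) (auto simp: density_matrix_def psd_def)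
      thus ?thesis unfolding R_def by (simp add: qf_sum_scaleR)
    qed
    hence "(a i)^2 \<le> D i" unfolding a_def D_def
      using pinsker_trace_bound[OF dens[OF i] dR _ _ bpos] A[OF i] by blast
    thus ?thesis using bpos by simp
  qed
  have "(\<Sum>i<m. \<beta> i * D i) = (\<Sum>i<m. \<beta> i * trace (\<rho> i ** mat_fun ln (\<rho> i)))
      - (\<Sum>i<m. \<beta> i * trace (\<rho> i ** mat_fun ln R))"
    by (simp add: D_def sum_subtractf[symmetric] algebra_simps)
  also have "(\<Sum>i<m. \<beta> i * trace (\<rho> i ** mat_fun ln R)) = trace (R ** mat_fun ln R)"
    unfolding R_def by (rule trace_sum_scaleR_mult[symmetric]) simp
  finally have gap: "(\<Sum>i<m. \<beta> i * D i) \<le> \<epsilon>^2"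
    using ent by (simp add: vn_entropy_def R_def sum_negf)
  have "(\<Sum>i<m. \<beta> i * \<bar>a i\<bar>)^2 \<le> (\<Sum>i<m. \<beta> i * (a i)^2)"
    using weighted_mean_sq_le[of "{..<m}" \<beta> "\<lambda>i. \<bar>a i\<bar>"] \<beta> sum1 by simp
  also have "\<dots> \<le> (\<Sum>i<m. \<beta> i * D i)" by (rule sum_mono) (simp add: aD)
  also have "\<dots> \<le> \<epsilon>^2" by (rule gap)
  finally have "(\<Sum>i<m. \<beta> i * \<bar>a i\<bar>) \<le> \<epsilon>" using eps by (rule power2_le_imp_le)
  moreover have "(\<Sum>i<m. \<beta> i * a i) \<le> (\<Sum>i<m. \<beta> i * \<bar>a i\<bar>)"
    using \<beta> by (intro sum_mono) (simp add: mult_left_mono)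
  ultimately show ?thesis unfolding a_def R_def by simp
qed

section \<open>Polynomial functions of bounded degree\<close>

lemma finite_bounded_degree_exponents: "finite {a :: 'n::finite \<Rightarrow> nat. sum a UNIV \<le> d}"
proof -
  have "{a :: 'n \<Rightarrow> nat. sum a UNIV \<le> d} \<subseteq> {f. \<forall>x. (x \<in> UNIV \<longrightarrow> f x \<in> {..d}) \<and> (x \<notin> UNIV \<longrightarrow> f x = 0)}"
  proof (clarsimp)
    fix a :: "'n \<Rightarrow> nat" and x assume "sum a UNIV \<le> d"
    moreover have "a x \<le> sum a UNIV" by (rule member_le_sum) auto
    ultimately show "a x \<le> d" by simp
  qed
  moreover have "finite {f. \<forall>x. (x \<in> (UNIV::'n set) \<longrightarrow> f x \<in> {..d}) \<and> (x \<notin> UNIV \<longrightarrow> f x = (0::nat))}"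
    by (rule finite_set_of_finite_funs) auto
  ultimately show ?thesis by (rule finite_subset)
qed

lemma monomial_fun_add: "monomial_fun (\<lambda>k. a k + b k) x = monomial_fun a x * monomial_fun b x"
  by (simp add: monomial_fun_def power_add prod.distrib)

lemma poly_fun_monomial: "sum s UNIV \<le> d \<Longrightarrow> poly_fun d (\<lambda>x. c * monomial_fun s x)"
  unfolding poly_fun_def
proof (intro exI[of _ "\<lambda>a. if a = s then c else 0"])
  assume s: "sum s UNIV \<le> d"
  have "(\<Sum>a\<in>{a. sum a UNIV \<le> d}. (if a = s then c else 0) * monomial_fun a x) = c * monomial_fun s x" for x
  proof -
    have "(\<Sum>a\<in>{a. sum a UNIV \<le> d}. (if a = s then c else 0) * monomial_fun a x)
        = (\<Sum>a\<in>{a. sum a UNIV \<le> d}. (if a = s then c * monomial_fun s x else 0))"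
      by (rule sum.cong) auto
    also have "\<dots> = c * monomial_fun s x" by (simp add: finite_bounded_degree_exponents s)
    finally show ?thesis .
  qed
  thus "(\<lambda>x. c * monomial_fun s x) = (\<lambda>x. \<Sum>a\<in>{a. sum a UNIV \<le> d}. (if a = s then c else 0) * monomial_fun a x)"
    by simp
qed

lemma poly_fun_add: "poly_fun d f \<Longrightarrow> poly_fun d g \<Longrightarrow> poly_fun d (\<lambda>x. f x + g x)"
  unfolding poly_fun_def
proof (elim exE)
  fix c e assume f: "f = (\<lambda>x. \<Sum>a\<in>{a. sum a UNIV \<le> d}. c a * monomial_fun a x)"
    and g: "g = (\<lambda>x. \<Sum>a\<in>{a. sum a UNIV \<le> d}. e a * monomial_fun a x)"
  show "\<exists>c. (\<lambda>x. f x + g x) = (\<lambda>x. \<Sum>a\<in>{a. sum a UNIV \<le> d}. c a * monomial_fun a x)"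
    by (intro exI[of _ "\<lambda>a. c a + e a"]) (simp add: f g sum.distrib algebra_simps)
qed

lemma poly_fun_scale: "poly_fun d f \<Longrightarrow> poly_fun d (\<lambda>x. c * f x)"
  unfolding poly_fun_def
proof (elim exE)
  fix e assume f: "f = (\<lambda>x. \<Sum>a\<in>{a. sum a UNIV \<le> d}. e a * monomial_fun a x)"
  show "\<exists>e'. (\<lambda>x. c * f x) = (\<lambda>x. \<Sum>a\<in>{a. sum a UNIV \<le> d}. e' a * monomial_fun a x)"
    by (intro exI[of _ "\<lambda>a. c * e a"]) (simp add: f sum_distrib_left algebra_simps)
qed

lemma poly_fun_sum:
  "finite I \<Longrightarrow> (\<And>i. i \<in> I \<Longrightarrow> poly_fun d (f i)) \<Longrightarrow> poly_fun d (\<lambda>x. \<Sum>i\<in>I. f i x)"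
proof (induction I rule: finite_induct)
  case empty
  show ?case unfolding poly_fun_def by (intro exI[of _ "\<lambda>a. 0"]) simp
qed (auto intro: poly_fun_add)

lemma poly_fun_mono:
  assumes "d \<le> e" "poly_fun d f" shows "poly_fun e f"
proof -
  obtain c where f: "f = (\<lambda>x. \<Sum>a\<in>{a. sum a UNIV \<le> d}. c a * monomial_fun a x)"
    using assms(2) unfolding poly_fun_def by blast
  have "poly_fun e (\<lambda>x. \<Sum>a\<in>{a. sum a UNIV \<le> d}. c a * monomial_fun a x)"
    using assms(1) by (intro poly_fun_sum finite_bounded_degree_exponents poly_fun_monomial) simp
  thus ?thesis using f by simp
qed

lemma poly_fun_mult:
  fixes f g :: "real^'n::finite \<Rightarrow> real"
  assumes "poly_fun d f" "poly_fun e g" shows "poly_fun (d + e) (\<lambda>x. f x * g x)"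
proof -
  obtain c where f: "f = (\<lambda>x. \<Sum>a\<in>{a. sum a UNIV \<le> d}. c a * monomial_fun a x)"
    using assms(1) unfolding poly_fun_def by blast
  obtain c' where g: "g = (\<lambda>x. \<Sum>a\<in>{a. sum a UNIV \<le> e}. c' a * monomial_fun a x)"
    using assms(2) unfolding poly_fun_def by blast
  have "(\<lambda>x. f x * g x) = (\<lambda>x. \<Sum>a\<in>{a. sum a UNIV \<le> d}. \<Sum>b\<in>{a. sum a UNIV \<le> e}.
       (c a * c' b) * monomial_fun (\<lambda>k. a k + b k) x)"
    unfolding f g sum_product by (simp only: monomial_fun_add mult_ac)
  moreover have "poly_fun (d+e) (\<lambda>x. \<Sum>a\<in>{a. sum a UNIV \<le> d}. \<Sum>b\<in>{a. sum a UNIV \<le> e}.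
       (c a * c' b) * monomial_fun (\<lambda>k. a k + b k) x)"
    by (intro poly_fun_sum finite_bounded_degree_exponents poly_fun_monomial)
      (simp add: sum.distrib add_mono)
  ultimately show ?thesis by simp
qed

lemma poly_fun_mult_1_1: "poly_fun 1 f \<Longrightarrow> poly_fun 1 g \<Longrightarrow> poly_fun 2 (\<lambda>x. f x * g x)"
  using poly_fun_mult[of 1 f 1 g] by (simp add: numeral_2_eq_2)

lemma poly_fun_mult_2_2: "poly_fun 2 f \<Longrightarrow> poly_fun 2 g \<Longrightarrow> poly_fun 4 (\<lambda>x. f x * g x)"
  using poly_fun_mult[of 2 f 2 g] by simp

lemma poly_fun_const: "poly_fun d (\<lambda>x. c)"
  using poly_fun_monomial[of "\<lambda>k. 0" d c] by (simp add: monomial_fun_def)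

lemma poly_fun_coordinate: "poly_fun 1 (\<lambda>x. x $ j)"
proof -
  have "monomial_fun (\<lambda>k. if k = j then 1 else 0) x = x $ j" for x
    unfolding monomial_fun_def by (simp add: if_distrib if_distribR cong: if_cong)
  thus ?thesis using poly_fun_monomial[of "\<lambda>k. if k = j then 1 else 0" 1 1] by simp
qed

lemma poly_fun_coordinate_mult: "poly_fun 2 h \<Longrightarrow> poly_fun 4 (\<lambda>x. x$j * x$k * h x)"
  by (intro poly_fun_mult_2_2 poly_fun_mult_1_1 poly_fun_coordinate)

lemma poly_fun_linear: "poly_fun 1 (\<lambda>x. L \<bullet> (x::real^'n::finite))"
proof -
  have "poly_fun 1 (\<lambda>x. \<Sum>j\<in>UNIV. L$j * x$j)"
    by (intro poly_fun_sum poly_fun_scale poly_fun_coordinate) auto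
  thus ?thesis by (simp add: inner_vec_def)
qed

lemma poly_fun_qf: "poly_fun 2 (qf (A::real^'n::finite^'n))"
proof -
  have "poly_fun 2 (\<lambda>x. \<Sum>i\<in>UNIV. \<Sum>j\<in>UNIV. A$i$j * (x$i * x$j))"
    by (intro poly_fun_sum poly_fun_scale poly_fun_mult_1_1 poly_fun_coordinate) auto
  moreover have "qf A = (\<lambda>x. \<Sum>i\<in>UNIV. \<Sum>j\<in>UNIV. A$i$j * (x$i * x$j))"
    by (auto simp: fun_eq_iff qf_def inner_vec_def matrix_vector_mult_def sum_distrib_left mult_ac)
  ultimately show ?thesis by simp
qed

lemma poly_fun_norm_sq: "poly_fun 2 (\<lambda>x. (norm (x::real^'n::finite))^2)"
  using poly_fun_qf[of "mat 1 :: real^'n^'n"] by (simp add: qf_def[abs_def] power2_norm_eq_inner)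

section \<open>Level-4 pseudoexpectations\<close>

context
  fixes E :: "(real^'n::finite \<Rightarrow> real) \<Rightarrow> real"
  assumes pexp: "pseudo_exp4 E"
begin

lemma pexp_add: "poly_fun 4 f \<Longrightarrow> poly_fun 4 g \<Longrightarrow> E (\<lambda>x. f x + g x) = E f + E g"
  using pexp by (simp add: pseudo_exp4_def)

lemma pexp_scale: "poly_fun 4 f \<Longrightarrow> E (\<lambda>x. c * f x) = c * E f"
  using pexp by (simp add: pseudo_exp4_def)

lemma pexp_one: "E (\<lambda>x. 1) = 1"
  using pexp by (simp add: pseudo_exp4_def)

lemma pexp_square_nonneg: "poly_fun 2 Q \<Longrightarrow> 0 \<le> E (\<lambda>x. (Q x)^2)"
  using pexp by (simp add: pseudo_exp4_def)

lemma pexp_sum: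
  "finite I \<Longrightarrow> (\<And>i. i \<in> I \<Longrightarrow> poly_fun 4 (f i)) \<Longrightarrow> E (\<lambda>x. \<Sum>i\<in>I. f i x) = (\<Sum>i\<in>I. E (f i))"
proof (induction I rule: finite_induct)
  case empty thus ?case using pexp_scale[OF poly_fun_const, of 0 1] by simp
next
  case (insert a F)
  have "E (\<lambda>x. \<Sum>i\<in>insert a F. f i x) = E (\<lambda>x. f a x + (\<Sum>i\<in>F. f i x))"
    using insert.hyps by simp
  also have "\<dots> = E (f a) + E (\<lambda>x. \<Sum>i\<in>F. f i x)"
    using insert.prems insert.hyps by (intro pexp_add poly_fun_sum) auto
  finally show ?case using insert by simp
qed

lemma pexp_sos_nonneg:
  "finite I \<Longrightarrow> (\<And>i. i \<in> I \<Longrightarrow> poly_fun 2 (q i)) \<Longrightarrow> 0 \<le> E (\<lambda>x. \<Sum>i\<in>I. (q i x)^2)"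
  by (subst pexp_sum) (auto simp: power2_eq_square intro: poly_fun_mult_2_2 sum_nonneg
      pexp_square_nonneg[unfolded power2_eq_square])

lemma pexp_qf_nonneg: "psd B \<Longrightarrow> 0 \<le> E (qf B)"
proof -
  assume "psd B"
  then obtain L :: "'n \<Rightarrow> real^'n" where L: "\<And>x. qf B x = (\<Sum>k\<in>UNIV. (L k \<bullet> x)^2)"
    by (metis psd_qf_sum_of_squares)
  have "0 \<le> E (\<lambda>x. \<Sum>k\<in>UNIV. (L k \<bullet> x)^2)"
    by (rule pexp_sos_nonneg) (auto intro: poly_fun_mono[OF _ poly_fun_linear])
  moreover have "qf B = (\<lambda>x. \<Sum>k\<in>UNIV. (L k \<bullet> x)^2)" using L by (rule ext)
  ultimately show ?thesis by simp
qed

text \<open>Products of two PSD forms are sums of squares of quadratics, which is exactly the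
  positivity a level-4 pseudoexpectation provides.\<close>

lemma pexp_qf_mult_nonneg: "psd P \<Longrightarrow> psd Q \<Longrightarrow> 0 \<le> E (\<lambda>x. qf P x * qf Q x)"
proof -
  assume "psd P" "psd Q"
  then obtain L L' :: "'n \<Rightarrow> real^'n" where L: "\<And>x. qf P x = (\<Sum>k\<in>UNIV. (L k \<bullet> x)^2)"
    and L': "\<And>x. qf Q x = (\<Sum>k\<in>UNIV. (L' k \<bullet> x)^2)"
    by (metis psd_qf_sum_of_squares)
  have "qf P x * qf Q x = (\<Sum>kl\<in>UNIV. ((L (fst kl) \<bullet> x) * (L' (snd kl) \<bullet> x))^2)" for x
  proof -
    have "qf P x * qf Q x = (\<Sum>k\<in>UNIV. \<Sum>l\<in>UNIV. (L k \<bullet> x)^2 * (L' l \<bullet> x)^2)"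
      using L L' by (simp add: sum_product)
    also have "\<dots> = (\<Sum>kl\<in>UNIV \<times> UNIV. (L (fst kl) \<bullet> x)^2 * (L' (snd kl) \<bullet> x)^2)"
      by (rule trans[OF sum.cartesian_product]) (rule sum.cong, auto)
    finally show ?thesis
      by (simp add: power_mult_distrib UNIV_Times_UNIV[symmetric] del: UNIV_Times_UNIV)
  qed
  moreover have "0 \<le> E (\<lambda>x. \<Sum>kl\<in>UNIV. ((L (fst kl) \<bullet> x) * (L' (snd kl) \<bullet> x))^2)"
    by (rule pexp_sos_nonneg) (auto intro: poly_fun_mult_1_1 poly_fun_linear)
  ultimately show ?thesis by simp
qed

lemma pexp_qf_mult:
  assumes h: "poly_fun 2 h"
  shows "E (\<lambda>x. qf C x * h x) = (\<Sum>j\<in>UNIV. \<Sum>k\<in>UNIV. C$j$k * E (\<lambda>x. x$j * x$k * h x))"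
proof -
  have "(\<lambda>x. qf C x * h x) = (\<lambda>x. \<Sum>j\<in>UNIV. \<Sum>k\<in>UNIV. C$j$k * (x$j * x$k * h x))"
    by (auto simp: fun_eq_iff qf_def inner_vec_def matrix_vector_mult_def sum_distrib_left
        sum_distrib_right mult_ac)
  moreover have "E (\<lambda>x. \<Sum>j\<in>UNIV. \<Sum>k\<in>UNIV. C$j$k * (x$j * x$k * h x)) =
      (\<Sum>j\<in>UNIV. E (\<lambda>x. \<Sum>k\<in>UNIV. C$j$k * (x$j * x$k * h x)))"
    by (rule pexp_sum) (auto intro!: poly_fun_sum poly_fun_scale poly_fun_coordinate_mult h)
  moreover have "E (\<lambda>x. \<Sum>k\<in>UNIV. C$j$k * (x$j * x$k * h x)) = (\<Sum>k\<in>UNIV. C$j$k * E (\<lambda>x. x$j * x$k * h x))" for j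
    by (subst pexp_sum) (simp_all add: pexp_scale poly_fun_scale poly_fun_coordinate_mult[OF h])
  ultimately show ?thesis by simp
qed

end

section \<open>Pseudoexpectations over the unit sphere\<close>

text \<open>When \<open>E (qf B) = 0\<close> this is a junk value (division by
  zero); there the statement lets \<open>\<rho>\<^sub>i\<close> be an arbitrary density matrix instead.\<close>

definition moment_matrix :: "((real^'n::finite \<Rightarrow> real) \<Rightarrow> real) \<Rightarrow> real^'n^'n \<Rightarrow> real^'n^'n" where
  "moment_matrix E B = (\<chi> j k. E (\<lambda>x. x $ j * x $ k * qf B x) / E (qf B))"

context
  fixes E :: "(real^'n::finite \<Rightarrow> real) \<Rightarrow> real"
  assumes pexp: "pseudo_exp4 E"
    and sphere: "\<forall>Q. poly_fun 2 Q \<longrightarrow> E (\<lambda>x. ((norm x)^2 - 1) * Q x) = 0"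
begin

lemma pexp_norm_sq_mult: "poly_fun 2 Q \<Longrightarrow> E (\<lambda>x. (norm x)^2 * Q x) = E Q"
proof -
  assume Q: "poly_fun 2 Q"
  have "poly_fun 2 (\<lambda>x::real^'n. (norm x)^2 - 1)"
    using poly_fun_add[OF poly_fun_norm_sq poly_fun_const[of 2 "-1"]] by simp
  hence "poly_fun 4 (\<lambda>x. ((norm x)^2 - 1) * Q x)" by (rule poly_fun_mult_2_2[OF _ Q])
  moreover have "poly_fun 4 Q" by (rule poly_fun_mono[OF _ Q]) simp
  ultimately have "E (\<lambda>x. ((norm x)^2 - 1) * Q x + Q x) = E (\<lambda>x. ((norm x)^2 - 1) * Q x) + E Q"
    by (rule pexp_add[OF pexp])
  thus ?thesis using sphere Q by (simp add: algebra_simps)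
qed

lemma density_matrix_moment_matrix:
  assumes B: "psd B" and pos: "0 < E (qf B)"
  shows "density_matrix (moment_matrix E B)"
proof -
  define \<rho> where "\<rho> = moment_matrix E B"
  have "transpose \<rho> = \<rho>" by (simp add: \<rho>_def moment_matrix_def transpose_def vec_eq_iff mult_ac)
  moreover have "0 \<le> qf \<rho> v" for v
  proof -
    have "qf \<rho> v = (\<Sum>j\<in>UNIV. \<Sum>k\<in>UNIV. outer v $ j $ k * E (\<lambda>x. x$j * x$k * qf B x)) / E (qf B)"
      by (simp add: \<rho>_def moment_matrix_def qf_def outer_def inner_vec_def matrix_vector_mult_def
          sum_distrib_left sum_divide_distrib mult_ac)
    also have "\<dots> = E (\<lambda>x. qf (outer v) x * qf B x) / E (qf B)"
      by (simp add: pexp_qf_mult[OF pexp poly_fun_qf])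
    finally have "qf \<rho> v = E (\<lambda>x. qf (outer v) x * qf B x) / E (qf B)" .
    thus ?thesis using pexp_qf_mult_nonneg[OF pexp psd_outer B] pos by simp
  qed
  moreover have "trace \<rho> = 1"
  proof -
    have "trace \<rho> = (\<Sum>j\<in>UNIV. E (\<lambda>x. x$j * x$j * qf B x)) / E (qf B)"
      by (simp add: \<rho>_def moment_matrix_def trace_def sum_divide_distrib)
    also have "(\<Sum>j\<in>UNIV. E (\<lambda>x. x$j * x$j * qf B x)) = E (\<lambda>x. (norm x)^2 * qf B x)"
      by (subst pexp_sum[OF pexp, symmetric])
        (auto intro: poly_fun_coordinate_mult poly_fun_qf simp: power2_norm_eq_inner inner_vec_def
          sum_distrib_right)
    also have "\<dots> = E (qf B)" by (rule pexp_norm_sq_mult[OF poly_fun_qf])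
    finally show ?thesis using pos by simp
  qed
  ultimately show ?thesis by (simp add: \<rho>_def density_matrix_def psd_def symmetric_mat_def)
qed

text \<open>When \<open>E[B(x)] = 0\<close> both sides vanish, because \<open>0 \<le> P(x)B(x) \<le> |x|\<^sup>2 B(x)\<close> in the
  sum-of-squares sense; so the junk value of \<open>\<rho>\<close> does not matter.\<close>

lemma pexp_qf_mult_eq_trace:
  assumes P: "psd P" "below_id P" and B: "psd B"
    and \<rho>: "0 < E (qf B) \<longrightarrow> \<rho> = moment_matrix E B"
  shows "E (\<lambda>x. qf P x * qf B x) = E (qf B) * trace (P ** \<rho>)"
proof (cases "E (qf B) = 0")
  case True
  have "(\<lambda>x. (norm x)^2 * qf B x) = (\<lambda>x. qf P x * qf B x + qf (mat 1 - P) x * qf B x)"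
    by (auto simp: qf_diff qf_mat_1 power2_norm_eq_inner algebra_simps)
  hence "E (\<lambda>x. (norm x)^2 * qf B x) = E (\<lambda>x. qf P x * qf B x) + E (\<lambda>x. qf (mat 1 - P) x * qf B x)"
    by (simp add: pexp_add[OF pexp] poly_fun_mult_2_2 poly_fun_qf)
  moreover have "0 \<le> E (\<lambda>x. qf (mat 1 - P) x * qf B x)"
    using P(2) by (intro pexp_qf_mult_nonneg[OF pexp _ B]) (simp add: below_id_def)
  moreover have "0 \<le> E (\<lambda>x. qf P x * qf B x)" by (rule pexp_qf_mult_nonneg[OF pexp P(1) B])
  ultimately show ?thesis using pexp_norm_sq_mult[OF poly_fun_qf] True by simp
next
  case False
  hence pos: "0 < E (qf B)" using pexp_qf_nonneg[OF pexp B] by simp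
  have "E (\<lambda>x. qf P x * qf B x) = (\<Sum>j\<in>UNIV. \<Sum>k\<in>UNIV. P$j$k * E (\<lambda>x. x$j * x$k * qf B x))"
    by (rule pexp_qf_mult[OF pexp poly_fun_qf])
  also have "\<dots> = E (qf B) * (\<Sum>j\<in>UNIV. \<Sum>k\<in>UNIV. P$j$k * \<rho>$k$j)"
    using \<rho> pos by (simp add: moment_matrix_def sum_distrib_left mult_ac)
  also have "(\<Sum>j\<in>UNIV. \<Sum>k\<in>UNIV. P$j$k * \<rho>$k$j) = trace (P ** \<rho>)"
    by (simp add: trace_def matrix_matrix_mult_def)
  finally show ?thesis .
qed

context
  fixes B :: "nat \<Rightarrow> real^'n^'n" and m :: nat
  assumes B: "\<And>i. i < m \<Longrightarrow> psd (B i)"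
    and partition: "\<And>x. (\<Sum>i<m. qf (B i) x) = (norm x)^2"
begin

lemma pexp_partition_sum: "(\<Sum>i<m. E (qf (B i))) = 1"
proof -
  have "(\<Sum>i<m. E (qf (B i))) = E (\<lambda>x. (norm x)^2 * 1)"
    by (subst pexp_sum[OF pexp, symmetric]) (auto intro: poly_fun_mono[OF _ poly_fun_qf] simp: partition)
  also have "\<dots> = 1" using pexp_norm_sq_mult[OF poly_fun_const, of 1] by (simp add: pexp_one[OF pexp])
  finally show ?thesis .
qed

lemma pexp_qf_eq_trace_mixture:
  assumes P: "psd P" "below_id P"
    and \<rho>: "\<And>i. i < m \<Longrightarrow> 0 < E (qf (B i)) \<longrightarrow> \<rho> i = moment_matrix E (B i)"
  shows "E (qf P) = trace (P ** (\<Sum>l<m. E (qf (B l)) *\<^sub>R \<rho> l))"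
proof -
  have "(\<lambda>x. (norm x)^2 * qf P x) = (\<lambda>x. \<Sum>l<m. qf P x * qf (B l) x)"
    by (simp add: partition[symmetric] sum_distrib_left sum_distrib_right mult_ac)
  hence "E (qf P) = E (\<lambda>x. \<Sum>l<m. qf P x * qf (B l) x)"
    using pexp_norm_sq_mult[OF poly_fun_qf, of P] by simp
  also have "\<dots> = (\<Sum>l<m. E (qf (B l)) * trace (P ** \<rho> l))"
    by (simp add: pexp_sum[OF pexp] poly_fun_mult_2_2 poly_fun_qf pexp_qf_mult_eq_trace[OF P B \<rho>])
  also have "\<dots> = trace (P ** (\<Sum>l<m. E (qf (B l)) *\<^sub>R \<rho> l))"
    by (simp add: trace_sum_scaleR_mult trace_mul_sym[of P])
  finally show ?thesis .
qed

text \<open>Both expectations are traces against the same states, so the covariance defect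
  \<open>\<Sum>\<^sub>i E[A\<^sub>i B\<^sub>i] - E A\<^sub>i E B\<^sub>i\<close> equals \<open>\<Sum>\<^sub>i \<beta>\<^sub>i tr(A\<^sub>i (\<rho>\<^sub>i - R))\<close>.\<close>

lemma pexp_covariance_bound:
  fixes A \<rho> :: "nat \<Rightarrow> real^'n^'n"
  assumes eps: "\<epsilon> \<ge> 0"
    and A: "\<And>i. i < m \<Longrightarrow> psd (A i) \<and> below_id (A i)"
    and \<rho>: "\<forall>i<m. (0 < E (qf (B i)) \<longrightarrow> \<rho> i = moment_matrix E (B i)) \<and>
          (E (qf (B i)) = 0 \<longrightarrow> density_matrix (\<rho> i))"
    and ent: "(\<Sum>i<m. E (qf (B i)) * vn_entropy (\<rho> i))
      \<ge> vn_entropy (\<Sum>i<m. E (qf (B i)) *\<^sub>R \<rho> i) - \<epsilon>^2"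
  shows "(\<Sum>i<m. E (qf (A i)) * E (qf (B i))) \<ge> (\<Sum>i<m. E (\<lambda>x. qf (A i) x * qf (B i) x)) - \<epsilon>"
proof -
  define \<beta> where "\<beta> i = E (qf (B i))" for i
  define R where "R = (\<Sum>l<m. \<beta> l *\<^sub>R \<rho> l)"
  have \<beta>: "0 \<le> \<beta> i" if "i < m" for i unfolding \<beta>_def by (rule pexp_qf_nonneg[OF pexp B[OF that]])
  have dens: "density_matrix (\<rho> i)" if "i < m" for i
    using \<rho> \<beta>[OF that] density_matrix_moment_matrix[OF B[OF that]] that
    by (cases "\<beta> i = 0") (auto simp: \<beta>_def)
  have "E (\<lambda>x. qf (A i) x * qf (B i) x) - E (qf (A i)) * \<beta> i = \<beta> i * trace (A i ** (\<rho> i - R))"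
    if i: "i < m" for i
  proof -
    have "E (\<lambda>x. qf (A i) x * qf (B i) x) = \<beta> i * trace (A i ** \<rho> i)"
      unfolding \<beta>_def using A[OF i] B[OF i] \<rho> i by (intro pexp_qf_mult_eq_trace) auto
    moreover have "E (qf (A i)) = trace (A i ** R)"
      unfolding R_def \<beta>_def using A[OF i] \<rho> by (intro pexp_qf_eq_trace_mixture) auto
    ultimately show ?thesis by (simp add: matrix_diff_ldistrib trace_sub algebra_simps)
  qed
  hence "(\<Sum>i<m. E (\<lambda>x. qf (A i) x * qf (B i) x)) - (\<Sum>i<m. E (qf (A i)) * \<beta> i)
      = (\<Sum>i<m. \<beta> i * trace (A i ** (\<rho> i - R)))"
    by (simp add: sum_subtractf[symmetric])
  also have "\<dots> \<le> \<epsilon>"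
    unfolding R_def using mixture_trace_deviation_le[OF A \<beta> dens pexp_partition_sum[folded \<beta>_def]]
      ent eps by (simp add: \<beta>_def)
  finally show ?thesis by (simp add: \<beta>_def mult.commute)
qed

end

end

section \<open>Finitely supported distributions on the sphere\<close>

lemma pmf_expectation_finite_sum:
  assumes "finite (set_pmf p)"
  shows "measure_pmf.expectation p (f :: 'a \<Rightarrow> real) = (\<Sum>x\<in>set_pmf p. f x * pmf p x)"
  by (rule integral_measure_pmf_real[OF assms]) simp

lemma pmf_expectation_pseudo_exp4:
  fixes p :: "(real^'n) pmf"
  assumes fin: "finite (set_pmf p)"
  shows "pseudo_exp4 (measure_pmf.expectation p)"
  unfolding pseudo_exp4_def pmf_expectation_finite_sum[OF fin]
  by (auto simp: sum.distrib algebra_simps sum_distrib_left sum_pmf_eq_1[OF fin] intro!: sum_nonneg)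

lemma pmf_expectation_on_sphere:
  fixes p :: "(real^'n) pmf"
  assumes fin: "finite (set_pmf p)" and un: "\<forall>x\<in>set_pmf p. norm x = 1"
  shows "\<forall>Q. poly_fun 2 Q \<longrightarrow> measure_pmf.expectation p (\<lambda>x. ((norm x)^2 - 1) * Q x) = 0"
  unfolding pmf_expectation_finite_sum[OF fin] using un by simp

lemma pmf_expectation_moment_matrix:
  fixes p :: "(real^'n) pmf" and B :: "real^'n^'n"
  assumes fin: "finite (set_pmf p)"
  shows "(1 / measure_pmf.expectation p (qf B)) *\<^sub>R measure_pmf.expectation p (\<lambda>x. qf B x *\<^sub>R outer x)
    = moment_matrix (measure_pmf.expectation p) B"
proof -
  have "measure_pmf.expectation p (\<lambda>x. qf B x *\<^sub>R outer x) = (\<Sum>a\<in>set_pmf p. pmf p a *\<^sub>R (qf B a *\<^sub>R outer a))"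
    by (rule integral_measure_pmf[OF fin]) simp
  thus ?thesis
    by (simp add: vec_eq_iff pmf_expectation_finite_sum[OF fin] moment_matrix_def sum_component
        outer_def sum_divide_distrib mult_ac)
qed

lemma pmf_covariance_bound:
  fixes A B :: "nat \<Rightarrow> real^'n^'n" and p :: "(real^'n) pmf" and \<rho> :: "nat \<Rightarrow> real^'n^'n"
  assumes eps: "\<epsilon> \<ge> 0"
    and A: "\<And>i. i < m \<Longrightarrow> psd (A i) \<and> below_id (A i)"
    and B: "\<And>i. i < m \<Longrightarrow> psd (B i)"
    and partition: "\<And>x. (\<Sum>i<m. qf (B i) x) = (norm x)^2"
    and fin: "finite (set_pmf p)" and un: "\<forall>x\<in>set_pmf p. norm x = 1"
    and \<rho>: "\<forall>i<m. let \<beta> = measure_pmf.expectation p (qf (B i)) in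
          (\<beta> > 0 \<longrightarrow> \<rho> i = (1 / \<beta>) *\<^sub>R measure_pmf.expectation p (\<lambda>x. qf (B i) x *\<^sub>R outer x)) \<and>
          (\<beta> = 0 \<longrightarrow> density_matrix (\<rho> i))"
    and ent: "(\<Sum>i<m. measure_pmf.expectation p (qf (B i)) * vn_entropy (\<rho> i))
        \<ge> vn_entropy (\<Sum>i<m. measure_pmf.expectation p (qf (B i)) *\<^sub>R \<rho> i) - \<epsilon>^2"
  shows "(\<Sum>i<m. measure_pmf.expectation p (qf (A i)) * measure_pmf.expectation p (qf (B i)))
        \<ge> (\<Sum>i<m. measure_pmf.expectation p (\<lambda>x. qf (A i) x * qf (B i) x)) - \<epsilon>"
proof (rule pexp_covariance_bound[OF pmf_expectation_pseudo_exp4[OF fin]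
      pmf_expectation_on_sphere[OF fin un] B partition eps A _ ent])
  show "\<forall>i<m. (0 < measure_pmf.expectation p (qf (B i)) \<longrightarrow>
      \<rho> i = moment_matrix (measure_pmf.expectation p) (B i)) \<and>
      (measure_pmf.expectation p (qf (B i)) = 0 \<longrightarrow> density_matrix (\<rho> i))"
    using \<rho> pmf_expectation_moment_matrix[OF fin] unfolding Let_def by metis
qed

theorem lemmaC2:
  fixes A B :: "nat \<Rightarrow> real^'n^'n" and m :: nat and \<epsilon> :: real
  assumes "\<epsilon> \<ge> 0"
    and "\<And>i. i < m \<Longrightarrow> psd (A i) \<and> below_id (A i)"
    and "\<And>i. i < m \<Longrightarrow> psd (B i)"
    and "\<And>x. (\<Sum>i<m. qf (B i) x) = (norm x)^2"
  shows
   "(\<forall>(p :: (real^'n) pmf) (\<rho> :: nat \<Rightarrow> real^'n^'n).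
      finite (set_pmf p) \<and> (\<forall>x\<in>set_pmf p. norm x = 1) \<and>
      (\<forall>i<m. let \<beta> = measure_pmf.expectation p (qf (B i)) in
          (\<beta> > 0 \<longrightarrow> \<rho> i = (1 / \<beta>) *\<^sub>R measure_pmf.expectation p (\<lambda>x. qf (B i) x *\<^sub>R outer x)) \<and>
          (\<beta> = 0 \<longrightarrow> density_matrix (\<rho> i))) \<and>
      (\<Sum>i<m. measure_pmf.expectation p (qf (B i)) * vn_entropy (\<rho> i))
        \<ge> vn_entropy (\<Sum>i<m. measure_pmf.expectation p (qf (B i)) *\<^sub>R \<rho> i) - \<epsilon>^2
      \<longrightarrow>
      (\<Sum>i<m. measure_pmf.expectation p (qf (A i)) * measure_pmf.expectation p (qf (B i)))
        \<ge> (\<Sum>i<m. measure_pmf.expectation p (\<lambda>x. qf (A i) x * qf (B i) x)) - \<epsilon>)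
    \<and>
    (\<forall>(E :: (real^'n \<Rightarrow> real) \<Rightarrow> real) (\<rho> :: nat \<Rightarrow> real^'n^'n).
      pseudo_exp4 E \<and>
      (\<forall>Q. poly_fun 2 Q \<longrightarrow> E (\<lambda>x. ((norm x)^2 - 1) * Q x) = 0) \<and>
      (\<forall>i<m. let \<beta> = E (qf (B i)) in
          (\<beta> > 0 \<longrightarrow> \<rho> i = (\<chi> j k. E (\<lambda>x. x $ j * x $ k * qf (B i) x) / \<beta>)) \<and>
          (\<beta> = 0 \<longrightarrow> density_matrix (\<rho> i))) \<and>
      (\<Sum>i<m. E (qf (B i)) * vn_entropy (\<rho> i))
        \<ge> vn_entropy (\<Sum>i<m. E (qf (B i)) *\<^sub>R \<rho> i) - \<epsilon>^2
      \<longrightarrow>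
      (\<Sum>i<m. E (qf (A i)) * E (qf (B i)))
        \<ge> (\<Sum>i<m. E (\<lambda>x. qf (A i) x * qf (B i) x)) - \<epsilon>)"
  apply (intro conjI allI impI; elim conjE)
   apply (rule pmf_covariance_bound[OF assms]; assumption)
  apply (rule pexp_covariance_bound[where A = A, OF _ _ assms(3,4,1,2)])
     apply (assumption | simp add: Let_def moment_matrix_def)+
  done

end
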